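(* Let $p$ be a prime and let $s(n)_{n\ge0}$ be a sequence of $p$-adic integers satisfying $s(n+\ell)+a_{\ell-1}s(n+\ell-1)+\cdots+a_0s(n)=0$ for all $n\ge0$ with $a_i\in\mathbb{Z}_p$. Let $g(x)=x^\ell+a_{\ell-1}x^{\ell-1}+\cdots+a_0$, let $K$ be a splitting field of $g$ over $\mathbb{Q}_p$ of degree $d$ and ramification index $e$, let $f=d/e$, and write $s(n)=\sum_\beta c_\beta(n)\beta^n$ for all $n\ge0$, where $\beta$ ranges over the distinct roots of $g$ in $K$ and $c_\beta(x)\in K[x]$. Let $a,b\in\mathbb Z$ with $a\ge1$. Then the limit $\lim_{n\to\infty}s(ap^{fn}+b)$ exists in $\mathbb{Z}_p$ and $$\lim_{n\to\infty}s(ap^{fn}+b)=\sum_{|\beta|_p=1}c_\beta(b)\,\omega(\beta)^a\beta^b.$$ In particular, this limit is algebraic over $\mathbb{Q}_p$.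
   Context: $|\cdot|_p$ on $K$ is the unique extension of the $p$-adic absolute value; the valuation has image $\frac1e\mathbb Z$ and a uniformizer $\pi$ has $|\pi|_p=p^{-1/e}$. The residue field of $\mathcal O_K=\{x:|x|_p\le1\}$ has $p^f$ elements and $\mathcal O_K$ contains the $(p^f-1)$-st roots of unity, which lie in distinct residue classes modulo $\pi$. For $x\in\mathcal O_K$ with $x\not\equiv0\pmod\pi$, $\omega(x)$ is the unique $(p^f-1)$-st root of unity congruent to $x$ modulo $\pi$. *)

theory Defs
  imports "HOL-Computational_Algebra.Computational_Algebra"
begin

definition abs_converges :: "('k \<Rightarrow> real) \<Rightarrow> (nat \<Rightarrow> 'k::ab_group_add) \<Rightarrow> 'k \<Rightarrow> bool" where
  "abs_converges absv X L \<longleftrightarrow> (\<forall>\<epsilon>>0. \<exists>N. \<forall>n\<ge>N. absv (X n - L) < \<epsilon>)"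

definition padic_absv :: "nat \<Rightarrow> ('k::field_char_0 \<Rightarrow> real) \<Rightarrow> bool" where
  "padic_absv p absv \<longleftrightarrow>
     (\<forall>x. absv x \<ge> 0) \<and> (\<forall>x. absv x = 0 \<longleftrightarrow> x = 0) \<and>
     (\<forall>x y. absv (x * y) = absv x * absv y) \<and>
     (\<forall>x y. absv (x + y) \<le> max (absv x) (absv y)) \<and>
     absv (of_nat p) = 1 / real p \<and>
     (\<forall>q::nat. prime q \<longrightarrow> q \<noteq> p \<longrightarrow> absv (of_nat q) = 1) \<and>
     (\<forall>X::nat \<Rightarrow> 'k. (\<forall>\<epsilon>>0. \<exists>N. \<forall>m\<ge>N. \<forall>n\<ge>N. absv (X m - X n) < \<epsilon>)
          \<longrightarrow> (\<exists>L. abs_converges absv X L))"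

text \<open>Q_p inside K: limits of sequences of rationals.\<close>
definition Qp_in :: "('k::field_char_0 \<Rightarrow> real) \<Rightarrow> 'k set" where
  "Qp_in absv = {x. \<exists>r::nat \<Rightarrow> rat. abs_converges absv (\<lambda>n. of_rat (r n)) x}"

definition Zp_in :: "('k::field_char_0 \<Rightarrow> real) \<Rightarrow> 'k set" where
  "Zp_in absv = {x \<in> Qp_in absv. absv x \<le> 1}"

definition field_generated_by :: "'k::field set \<Rightarrow> 'k set \<Rightarrow> bool" where
  "field_generated_by F S \<longleftrightarrow>
     (\<forall>T. F \<subseteq> T \<longrightarrow> S \<subseteq> T \<longrightarrow>
        (\<forall>x\<in>T. \<forall>y\<in>T. x + y \<in> T \<and> x * y \<in> T \<and> - x \<in> T \<and> inverse x \<in> T)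
        \<longrightarrow> T = UNIV)"

definition ext_degree :: "'k::field set \<Rightarrow> nat \<Rightarrow> bool" where
  "ext_degree F d \<longleftrightarrow> (\<exists>bs::'k list. length bs = d \<and>
     (\<forall>c. (\<forall>i<d. c i \<in> F) \<longrightarrow> (\<Sum>i<d. c i * bs ! i) = 0 \<longrightarrow> (\<forall>i<d. c i = 0)) \<and>
     (\<forall>x. \<exists>c. (\<forall>i<d. c i \<in> F) \<and> x = (\<Sum>i<d. c i * bs ! i)))"

text \<open>Teichmueller-type map: the unique (q-1)-st root of unity congruent to x
  modulo the maximal ideal (for a unit x, with q = p^f).\<close>
definition omega :: "('k::field \<Rightarrow> real) \<Rightarrow> nat \<Rightarrow> 'k \<Rightarrow> 'k" where
  "omega absv q x = (THE z. z ^ (q - 1) = 1 \<and> absv (x - z) < 1)"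

end

theory Submission
  imports Defs
begin

text \<open>The roots \<beta> of g are integral, since g is monic with integral coefficients. Along
  n = A q^k + B, where q = p^f is the cardinality of the residue field, the polynomial factors
  c_\<beta>(n) tend to c_\<beta>(B) because q^k tends to 0 p-adically; the powers \<beta>^n of the roots
  with |\<beta>| < 1 tend to 0; and for a unit \<beta> the powers \<beta>^(q^k) converge to the Teichmueller
  representative \<omega>(\<beta>), because \<beta>^q is congruent to \<beta> (Fermat's little theorem in the residue
  field) and raising to the q-th power contracts differences. The limit lies in Z_p as Z_p is
  closed. That f = d/e is the residue degree is the fundamental identity d = e f, obtained by
  showing that the elements \<pi>^i r_j (\<pi> a uniformizer, r_j lifts of an F_p-basis of the
  residue field) form a Q_p-basis of K.\<close>


section \<open>Nonarchimedean absolute values\<close>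

locale nonarch_absv =
  fixes absv :: "'k::field \<Rightarrow> real"
  assumes absv_nonneg [simp]: "absv x \<ge> 0"
    and absv_eq_0_iff [simp]: "absv x = 0 \<longleftrightarrow> x = 0"
    and absv_mult [simp]: "absv (x * y) = absv x * absv y"
    and absv_ultra: "absv (x + y) \<le> max (absv x) (absv y)"
begin

lemma absv_zero [simp]: "absv 0 = 0"
  by simp

lemma absv_pos_iff [simp]: "absv x > 0 \<longleftrightarrow> x \<noteq> 0"
  using absv_nonneg[of x] absv_eq_0_iff[of x] by linarith

lemma absv_one [simp]: "absv 1 = 1"
  using absv_mult[of 1 1] by (metis absv_eq_0_iff mult_cancel_left1 one_neq_zero)

lemma absv_minus [simp]: "absv (- x) = absv x"
proof -
  have "absv (-1) * absv (-1) = 1"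
    using absv_mult[of "-1" "-1"] by simp
  then have "absv (-1) = 1"
    using absv_nonneg[of "-1"] by (metis abs_of_nonneg abs_square_eq_1 power2_eq_square)
  then show ?thesis
    using absv_mult[of "-1" x] by simp
qed

lemma absv_minus_commute: "absv (x - y) = absv (y - x)"
  by (metis absv_minus minus_diff_eq)

lemma absv_power: "absv (x ^ n) = absv x ^ n"
  by (induction n) auto

lemma absv_inverse: "absv (inverse x) = inverse (absv x)"
proof (cases "x = 0")
  case False
  then have "absv (inverse x) * absv x = 1"
    by (simp flip: absv_mult)
  then show ?thesis
    by (metis inverse_unique mult.commute)
qed simp

lemma absv_divide: "absv (x / y) = absv x / absv y"
  by (simp add: divide_inverse absv_inverse)

lemma absv_diff_le_max: "absv (x - y) \<le> max (absv x) (absv y)"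
  using absv_ultra[of x "- y"] by simp

lemma absv_triangle: "absv (x - z) \<le> max (absv (x - y)) (absv (y - z))"
  using absv_ultra[of "x - y" "y - z"] by simp

lemma absv_add_eq_left:
  assumes "absv y < absv x"
  shows "absv (x + y) = absv x"
proof -
  have "absv (x + y) \<le> absv x"
    using absv_ultra[of x y] assms by simp
  moreover have "absv x \<le> max (absv (x + y)) (absv y)"
    using absv_ultra[of "x + y" "- y"] by simp
  ultimately show ?thesis
    using assms by linarith
qed

lemma absv_add_le: "absv x \<le> b \<Longrightarrow> absv y \<le> b \<Longrightarrow> absv (x + y) \<le> b"
  using absv_ultra[of x y] by linarith

lemma absv_add_less: "absv x < b \<Longrightarrow> absv y < b \<Longrightarrow> absv (x + y) < b"
  using absv_ultra[of x y] by linarith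

lemma absv_sum_le:
  assumes "\<And>i. i \<in> S \<Longrightarrow> absv (f i) \<le> b" "b \<ge> 0"
  shows "absv (sum f S) \<le> b"
  using assms
proof (induction S rule: infinite_finite_induct)
  case (insert x F)
  then show ?case
    by (simp add: absv_add_le)
qed simp_all

lemma absv_sum_less:
  assumes "\<And>i. i \<in> S \<Longrightarrow> absv (f i) < b" "b > 0"
  shows "absv (sum f S) < b"
  using assms
proof (induction S rule: infinite_finite_induct)
  case (insert x F)
  then show ?case
    by (simp add: absv_add_less)
qed simp_all

lemma absv_prod: "absv (prod f S) = (\<Prod>i\<in>S. absv (f i))"
  by (induction S rule: infinite_finite_induct) auto

lemma absv_of_nat_le_1: "absv (of_nat n) \<le> 1"
proof (induction n)
  case (Suc n)
  then show ?case
    using absv_ultra[of 1 "of_nat n"] by simp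
qed simp

lemma absv_of_int_le_1: "absv (of_int n) \<le> 1"
  by (metis absv_minus absv_of_nat_le_1 int_cases2 of_int_minus of_int_of_nat_eq)

lemma absv_mult_less_1: "absv x < 1 \<Longrightarrow> absv y \<le> 1 \<Longrightarrow> absv (x * y) < 1"
  using mult_left_le[of "absv y" "absv x"] by simp

lemma absv_power_diff_le:
  assumes "absv x \<le> 1" "absv y \<le> 1"
  shows "absv (x ^ n - y ^ n) \<le> absv (x - y)"
proof (induction n)
  case (Suc n)
  have "absv (y ^ n) \<le> 1"
    using assms by (simp add: absv_power power_le_one)
  then have "absv ((x - y) * y ^ n) \<le> absv (x - y)"
    by (simp add: mult_left_le)
  moreover have "absv (x * (x ^ n - y ^ n)) \<le> absv (x - y)"
    using Suc assms(1) mult_mono[of "absv x" 1 "absv (x ^ n - y ^ n)" "absv (x - y)"] by simp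
  moreover have "x ^ Suc n - y ^ Suc n = x * (x ^ n - y ^ n) + (x - y) * y ^ n"
    by (simp add: algebra_simps)
  ultimately show ?case
    using absv_ultra[of "x * (x ^ n - y ^ n)" "(x - y) * y ^ n"] by simp
qed simp

abbreviation converges :: "(nat \<Rightarrow> 'k) \<Rightarrow> 'k \<Rightarrow> bool" where
  "converges X L \<equiv> abs_converges absv X L"

lemma converges_iff_eventually:
  "converges X L \<longleftrightarrow> (\<forall>\<epsilon>>0. eventually (\<lambda>n. absv (X n - L) < \<epsilon>) sequentially)"
  unfolding abs_converges_def eventually_sequentially ..

lemma convergesD: "converges X L \<Longrightarrow> \<epsilon> > 0 \<Longrightarrow> eventually (\<lambda>n. absv (X n - L) < \<epsilon>) sequentially"
  unfolding converges_iff_eventually by blast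

lemma converges_const: "converges (\<lambda>n. c) c"
  unfolding converges_iff_eventually by simp

lemma converges_unique:
  assumes "converges X L" "converges X M"
  shows "L = M"
proof (rule ccontr)
  assume "L \<noteq> M"
  then have "eventually (\<lambda>n. absv (X n - L) < absv (L - M) \<and> absv (X n - M) < absv (L - M)) sequentially"
    using assms by (intro eventually_conj convergesD) auto
  then obtain N where "\<forall>n\<ge>N. absv (X n - L) < absv (L - M) \<and> absv (X n - M) < absv (L - M)"
    by (auto simp: eventually_sequentially)
  then have "absv (X N - L) < absv (L - M)" "absv (X N - M) < absv (L - M)"
    by auto
  then show False
    using absv_triangle[of L M "X N"] absv_minus_commute[of L "X N"] by linarith
qed

lemma converges_cong:
  assumes "converges X L" "eventually (\<lambda>n. X n = Y n) sequentially"
  shows "converges Y L"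
  unfolding converges_iff_eventually
proof (intro allI impI)
  fix \<epsilon> :: real
  assume "\<epsilon> > 0"
  with assms have "eventually (\<lambda>n. absv (X n - L) < \<epsilon> \<and> X n = Y n) sequentially"
    by (intro eventually_conj convergesD)
  then show "eventually (\<lambda>n. absv (Y n - L) < \<epsilon>) sequentially"
    by (rule eventually_mono) auto
qed

lemma converges_Suc: "converges X L \<Longrightarrow> converges (\<lambda>n. X (Suc n)) L"
  unfolding abs_converges_def by (meson le_SucI)

lemma converges_add:
  assumes "converges X L" "converges Y M"
  shows "converges (\<lambda>n. X n + Y n) (L + M)"
  unfolding converges_iff_eventually
proof (intro allI impI)
  fix \<epsilon> :: real
  assume "\<epsilon> > 0"
  with assms have "eventually (\<lambda>n. absv (X n - L) < \<epsilon> \<and> absv (Y n - M) < \<epsilon>) sequentially"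
    by (intro eventually_conj convergesD)
  then show "eventually (\<lambda>n. absv (X n + Y n - (L + M)) < \<epsilon>) sequentially"
  proof (rule eventually_mono)
    fix n
    assume "absv (X n - L) < \<epsilon> \<and> absv (Y n - M) < \<epsilon>"
    then have "absv ((X n - L) + (Y n - M)) < \<epsilon>"
      by (intro absv_add_less) auto
    then show "absv (X n + Y n - (L + M)) < \<epsilon>"
      by (simp add: algebra_simps)
  qed
qed

lemma converges_minus: "converges X L \<Longrightarrow> converges (\<lambda>n. - X n) (- L)"
  unfolding abs_converges_def by (metis absv_minus minus_diff_eq minus_diff_minus)

lemma converges_diff:
  "converges X L \<Longrightarrow> converges Y M \<Longrightarrow> converges (\<lambda>n. X n - Y n) (L - M)"
  using converges_add[of X L "\<lambda>n. - Y n" "- M"] converges_minus[of Y M] by simp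

lemma converges_mult:
  assumes "converges X L" "converges Y M"
  shows "converges (\<lambda>n. X n * Y n) (L * M)"
  unfolding converges_iff_eventually
proof (intro allI impI)
  fix \<epsilon> :: real
  assume "\<epsilon> > 0"
  define B where "B = max (max (absv L) (absv M)) 1"
  have "B \<ge> 1" "absv L \<le> B" "absv M \<le> B"
    unfolding B_def by auto
  have small: "a * b < \<epsilon>" if "0 \<le> a" "a \<le> B" "0 \<le> b" "b < \<epsilon> / B" for a b
  proof -
    have "a * b \<le> B * b"
      using that by (simp add: mult_right_mono)
    also have "\<dots> < \<epsilon>"
      using that \<open>B \<ge> 1\<close> by (simp add: pos_less_divide_eq mult.commute)
    finally show ?thesis .
  qed
  have "eventually (\<lambda>n. absv (X n - L) < 1 \<and> absv (X n - L) < \<epsilon> / B \<and> absv (Y n - M) < \<epsilon> / B) sequentially"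
    using assms \<open>\<epsilon> > 0\<close> \<open>B \<ge> 1\<close> by (intro eventually_conj convergesD) auto
  then show "eventually (\<lambda>n. absv (X n * Y n - L * M) < \<epsilon>) sequentially"
  proof (rule eventually_mono)
    fix n
    assume n: "absv (X n - L) < 1 \<and> absv (X n - L) < \<epsilon> / B \<and> absv (Y n - M) < \<epsilon> / B"
    then have "absv (X n) \<le> B"
      using absv_add_le[of "X n - L" B L] \<open>absv L \<le> B\<close> \<open>B \<ge> 1\<close> by simp
    then have "absv (X n * (Y n - M)) < \<epsilon>" "absv ((X n - L) * M) < \<epsilon>"
      using n \<open>absv M \<le> B\<close> small[of "absv (X n)" "absv (Y n - M)"] small[of "absv M" "absv (X n - L)"]
      by (simp_all add: mult.commute)
    moreover have "X n * Y n - L * M = X n * (Y n - M) + (X n - L) * M"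
      by (simp add: algebra_simps)
    ultimately show "absv (X n * Y n - L * M) < \<epsilon>"
      using absv_add_less[of "X n * (Y n - M)" \<epsilon> "(X n - L) * M"] by simp
  qed
qed

lemma converges_sum:
  "(\<And>i. i \<in> S \<Longrightarrow> converges (X i) (L i)) \<Longrightarrow> converges (\<lambda>n. \<Sum>i\<in>S. X i n) (\<Sum>i\<in>S. L i)"
  by (induction S rule: infinite_finite_induct) (auto intro: converges_const converges_add)

lemma converges_power: "converges X L \<Longrightarrow> converges (\<lambda>n. X n ^ k) (L ^ k)"
  by (induction k) (auto intro: converges_const converges_mult)

lemma converges_poly: "converges X x \<Longrightarrow> converges (\<lambda>n. poly c (X n)) (poly c x)"
  by (induction c) (auto intro: converges_const converges_add converges_mult)

lemma converges_inverse:
  assumes "converges X L" "L \<noteq> 0"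
  shows "converges (\<lambda>n. inverse (X n)) (inverse L)"
  unfolding converges_iff_eventually
proof (intro allI impI)
  fix \<epsilon> :: real
  assume "\<epsilon> > 0"
  with assms have "eventually (\<lambda>n. absv (X n - L) < absv L \<and> absv (X n - L) < \<epsilon> * absv L * absv L) sequentially"
    by (intro eventually_conj convergesD) auto
  then show "eventually (\<lambda>n. absv (inverse (X n) - inverse L) < \<epsilon>) sequentially"
  proof (rule eventually_mono)
    fix n
    assume n: "absv (X n - L) < absv L \<and> absv (X n - L) < \<epsilon> * absv L * absv L"
    then have "absv (X n) = absv L"
      using absv_add_eq_left[of "X n - L" L] by simp
    then have "X n \<noteq> 0"
      using assms(2) by auto
    then have "inverse (X n) - inverse L = (L - X n) / (X n * L)"
      using assms(2) by (simp add: field_simps)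
    then show "absv (inverse (X n) - inverse L) < \<epsilon>"
      using n assms(2) absv_minus_commute[of L "X n"] \<open>absv (X n) = absv L\<close>
      by (simp add: absv_divide pos_divide_less_eq mult.assoc)
  qed
qed

lemma converges_zero_geometric:
  assumes "0 \<le> \<rho>" "\<rho> < 1" "eventually (\<lambda>n. absv (X n) \<le> C * \<rho> ^ n) sequentially"
  shows "converges X 0"
  unfolding converges_iff_eventually
proof (intro allI impI)
  fix \<epsilon> :: real
  assume "\<epsilon> > 0"
  have "(\<lambda>n. C * \<rho> ^ n) \<longlonglongrightarrow> 0"
    using assms(1,2) by (intro tendsto_mult_right_zero LIMSEQ_power_zero) simp
  then have "eventually (\<lambda>n. C * \<rho> ^ n < \<epsilon>) sequentially"
    using \<open>\<epsilon> > 0\<close> by (rule order_tendstoD)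
  with assms(3) show "eventually (\<lambda>n. absv (X n - 0) < \<epsilon>) sequentially"
    by eventually_elim simp
qed

lemma converges_absv_le:
  assumes "converges X L" "\<And>n. absv (X n) \<le> b"
  shows "absv L \<le> b"
proof (rule ccontr)
  assume "\<not> absv L \<le> b"
  moreover have "b \<ge> 0"
    using absv_nonneg[of "X 0"] assms(2)[of 0] by linarith
  ultimately have "absv L > 0"
    by linarith
  from convergesD[OF assms(1) this] obtain N where "\<forall>n\<ge>N. absv (X n - L) < absv L"
    by (auto simp: eventually_sequentially)
  then have "absv (X N - L) < absv L"
    by blast
  then have "absv (X N) = absv L"
    using absv_add_eq_left[of "X N - L" L] by simp
  then show False
    using assms(2)[of N] \<open>\<not> absv L \<le> b\<close> by simp
qed

lemma absv_diff_le_geometric: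
  assumes "\<And>n. absv (X (Suc n) - X n) \<le> C * \<rho> ^ n" "0 \<le> \<rho>" "\<rho> \<le> 1" "n \<le> m"
  shows "absv (X m - X n) \<le> C * \<rho> ^ n"
  using assms(4)
proof (induction m rule: dec_induct)
  case base
  show ?case
    using order_trans[OF absv_nonneg assms(1)[of n]] by simp
next
  case (step m)
  have "C \<ge> 0"
    using order_trans[OF absv_nonneg assms(1)[of 0]] by simp
  then have "absv (X (Suc m) - X m) \<le> C * \<rho> ^ n"
    using assms(1)[of m] assms(2,3) step.hyps(1)
    by (meson mult_left_mono order_trans power_decreasing)
  then show ?case
    using absv_ultra[of "X (Suc m) - X m" "X m - X n"] step.IH by simp
qed

lemma absv_sum_eq_dominant:
  assumes "finite S" "i0 \<in> S" "\<And>i. i \<in> S - {i0} \<Longrightarrow> absv (f i) < absv (f i0)"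
  shows "absv (sum f S) = absv (f i0)"
proof (cases "S - {i0} = {}")
  case True
  then have "S = {i0}"
    using assms(2) by blast
  then show ?thesis
    by simp
next
  case False
  then have "absv (f i0) > 0"
    using assms(3) absv_nonneg by (meson ex_in_conv le_less_trans)
  then have "absv (sum f (S - {i0})) < absv (f i0)"
    using assms(3) by (rule absv_sum_less[rotated])
  then show ?thesis
    using assms(1,2) by (simp add: sum.remove absv_add_eq_left)
qed

lemma absv_prod_diff_less_1:
  assumes "\<And>i. i \<in> S \<Longrightarrow> absv (a i) \<le> 1 \<and> absv (b i) \<le> 1 \<and> absv (a i - b i) < 1"
  shows "absv (prod a S - prod b S) < 1"
  using assms
proof (induction S rule: infinite_finite_induct)
  case (insert i S)
  have "absv (prod b S) \<le> 1"
    using insert.prems by (simp add: absv_prod prod_le_1)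
  then have "absv ((a i - b i) * prod b S) < 1"
    using insert.prems by (intro absv_mult_less_1) auto
  moreover have "absv (a i * (prod a S - prod b S)) < 1"
    using insert absv_mult_less_1[of "prod a S - prod b S" "a i"] by (simp add: mult.commute)
  ultimately have "absv (a i * (prod a S - prod b S) + (a i - b i) * prod b S) < 1"
    by (intro absv_add_less)
  moreover have "prod a (insert i S) - prod b (insert i S) = a i * (prod a S - prod b S) + (a i - b i) * prod b S"
    using insert.hyps by (simp add: algebra_simps)
  ultimately show ?case
    by simp
qed simp_all

lemma absv_root_le_1:
  assumes "\<forall>i<l. absv (a i) \<le> 1" "poly (monom 1 l + (\<Sum>i<l. monom (a i) i)) \<beta> = 0"
  shows "absv \<beta> \<le> 1"
proof (rule ccontr)
  assume "\<not> absv \<beta> \<le> 1"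
  then have \<beta>: "absv \<beta> > 1"
    by simp
  have "absv (a i * \<beta> ^ i) < absv (\<beta> ^ l)" if "i < l" for i
  proof -
    have "absv (a i * \<beta> ^ i) \<le> absv \<beta> ^ i"
      using assms(1) that by (simp add: absv_power mult_left_le_one_le)
    also have "\<dots> < absv \<beta> ^ l"
      using \<beta> that by (intro power_strict_increasing) auto
    finally show ?thesis
      by (simp add: absv_power)
  qed
  moreover have "absv (\<beta> ^ l) > 0"
    using \<beta> unfolding absv_power by (intro zero_less_power) linarith
  ultimately have "absv (\<Sum>i<l. a i * \<beta> ^ i) < absv (\<beta> ^ l)"
    by (intro absv_sum_less) auto
  then have "absv (\<beta> ^ l + (\<Sum>i<l. a i * \<beta> ^ i)) = absv (\<beta> ^ l)"
    by (rule absv_add_eq_left)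
  moreover have "\<beta> ^ l + (\<Sum>i<l. a i * \<beta> ^ i) = 0"
    using assms(2) by (simp add: poly_sum poly_monom)
  ultimately show False
    using \<beta> by (simp add: absv_power)
qed

end

section \<open>Linear algebra over a subfield\<close>

definition subfield :: "'k::field set \<Rightarrow> bool" where
  "subfield F \<longleftrightarrow> 0 \<in> F \<and> 1 \<in> F \<and>
     (\<forall>x\<in>F. \<forall>y\<in>F. x + y \<in> F \<and> x * y \<in> F \<and> - x \<in> F \<and> inverse x \<in> F)"

lemma subfield_closed:
  assumes "subfield F" "x \<in> F" "y \<in> F"
  shows "x + y \<in> F" "x * y \<in> F" "- x \<in> F" "x - y \<in> F" "x / y \<in> F"
  using assms unfolding subfield_def
  by (auto simp: divide_inverse) (metis diff_conv_add_uminus)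

lemma subfield_sum: "subfield F \<Longrightarrow> (\<And>i. i \<in> S \<Longrightarrow> f i \<in> F) \<Longrightarrow> sum f S \<in> F"
  by (induction S rule: infinite_finite_induct) (auto simp: subfield_def)

definition lin_indep_on :: "'k::field set \<Rightarrow> 'i set \<Rightarrow> ('i \<Rightarrow> 'k) \<Rightarrow> bool" where
  "lin_indep_on F I v \<longleftrightarrow>
     (\<forall>c. (\<forall>i\<in>I. c i \<in> F) \<longrightarrow> (\<Sum>i\<in>I. c i * v i) = 0 \<longrightarrow> (\<forall>i\<in>I. c i = 0))"

definition in_span_on :: "'k::field set \<Rightarrow> 'i set \<Rightarrow> ('i \<Rightarrow> 'k) \<Rightarrow> 'k \<Rightarrow> bool" where
  "in_span_on F I w x \<longleftrightarrow> (\<exists>c. (\<forall>i\<in>I. c i \<in> F) \<and> x = (\<Sum>i\<in>I. c i * w i))"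

lemma dependent_lift:
  assumes "subfield F" "finite K" "k0 \<in> K" "\<forall>k\<in>K. r k \<in> F"
    and "\<forall>k\<in>K - {k0}. c k \<in> F" "\<exists>k\<in>K - {k0}. c k \<noteq> 0"
    and "(\<Sum>k\<in>K - {k0}. c k * (v k - r k * v k0)) = 0"
  shows "\<exists>c'. (\<forall>k\<in>K. c' k \<in> F) \<and> (\<exists>k\<in>K. c' k \<noteq> 0) \<and> (\<Sum>k\<in>K. c' k * v k) = 0"
proof -
  define c' where "c' k = (if k = k0 then - (\<Sum>i\<in>K - {k0}. c i * r i) else c k)" for k
  have "(\<Sum>k\<in>K. c' k * v k) = c' k0 * v k0 + (\<Sum>k\<in>K - {k0}. c k * v k)"
    unfolding c'_def using assms(2,3) by (simp add: sum.remove)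
  also have "\<dots> = (\<Sum>k\<in>K - {k0}. c k * (v k - r k * v k0))"
    unfolding c'_def by (simp add: algebra_simps sum_subtractf sum_distrib_left)
  finally have "(\<Sum>k\<in>K. c' k * v k) = 0"
    using assms(7) by simp
  moreover have "\<forall>k\<in>K. c' k \<in> F"
  proof -
    have "(\<Sum>i\<in>K - {k0}. c i * r i) \<in> F"
      using assms(1,4,5) by (intro subfield_sum) (auto simp: subfield_closed)
    then show ?thesis
      using assms(1,5) subfield_closed(3) unfolding c'_def by auto
  qed
  moreover have "\<exists>k\<in>K. c' k \<noteq> 0"
    using assms(6) unfolding c'_def by auto
  ultimately show ?thesis
    by blast
qed

text \<open>Gaussian elimination of the coordinate j: subtracting multiples of a vector v k0 with
  nonzero j-th coordinate removes that coordinate from all other vectors.\<close>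
lemma span_dependent:
  fixes M :: "'a \<Rightarrow> 'b \<Rightarrow> 'k::field"
  assumes "subfield F" "finite J" "finite K" "card J < card K"
    and "\<forall>k\<in>K. \<forall>j\<in>J. M k j \<in> F" "\<forall>k\<in>K. v k = (\<Sum>j\<in>J. M k j * w j)"
  shows "\<exists>c. (\<forall>k\<in>K. c k \<in> F) \<and> (\<exists>k\<in>K. c k \<noteq> 0) \<and> (\<Sum>k\<in>K. c k * v k) = 0"
  using assms(2-)
proof (induction J arbitrary: K M v rule: finite_induct)
  case empty
  then obtain k0 where "k0 \<in> K"
    by fastforce
  then show ?case
    using empty.prems assms(1) unfolding subfield_def
    by (intro exI[of _ "\<lambda>k. 1"]) auto
next
  case (insert j J)
  show ?case
  proof (cases "\<forall>k\<in>K. M k j = 0")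
    case True
    then show ?thesis
      using insert by (intro insert.IH[of K M v]) auto
  next
    case False
    then obtain k0 where k0: "k0 \<in> K" "M k0 j \<noteq> 0"
      by blast
    define r where "r k = M k j / M k0 j" for k
    define N where "N k i = M k i - r k * M k0 i" for k i
    have rF: "\<forall>k\<in>K. r k \<in> F"
      unfolding r_def using k0(1) insert.prems(3) assms(1) by (simp add: subfield_closed)
    have "\<exists>c. (\<forall>k\<in>K - {k0}. c k \<in> F) \<and> (\<exists>k\<in>K - {k0}. c k \<noteq> 0)
        \<and> (\<Sum>k\<in>K - {k0}. c k * (v k - r k * v k0)) = 0"
    proof (rule insert.IH)
      show "card J < card (K - {k0})"
        using insert k0(1) by simp
      show "\<forall>k\<in>K - {k0}. \<forall>i\<in>J. N k i \<in> F"
        unfolding N_def using insert.prems(3) k0(1) rF assms(1) by (simp add: subfield_closed)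
      show "\<forall>k\<in>K - {k0}. v k - r k * v k0 = (\<Sum>i\<in>J. N k i * w i)"
      proof
        fix k
        assume "k \<in> K - {k0}"
        then have "v k - r k * v k0 = (\<Sum>i\<in>insert j J. N k i * w i)"
          using insert.prems(4) k0(1) unfolding N_def
          by (simp add: sum_distrib_left sum_subtractf algebra_simps)
        also have "\<dots> = (\<Sum>i\<in>J. N k i * w i)"
          using insert.hyps k0(2) by (simp add: N_def r_def)
        finally show "v k - r k * v k0 = (\<Sum>i\<in>J. N k i * w i)" .
      qed
    qed (use insert.prems in auto)
    then show ?thesis
      using dependent_lift[OF assms(1) insert.prems(1) k0(1) rF] by blast
  qed
qed

lemma card_le_if_lin_indep_in_span:
  assumes "subfield F" "finite J" "finite K" "lin_indep_on F K v" "\<forall>k\<in>K. in_span_on F J w (v k)"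
  shows "card K \<le> card J"
proof (rule ccontr)
  assume "\<not> card K \<le> card J"
  obtain M where "\<forall>k\<in>K. (\<forall>j\<in>J. M k j \<in> F) \<and> v k = (\<Sum>j\<in>J. M k j * w j)"
    using assms(5) unfolding in_span_on_def by metis
  then obtain c where "\<forall>k\<in>K. c k \<in> F" "\<exists>k\<in>K. c k \<noteq> 0" "(\<Sum>k\<in>K. c k * v k) = 0"
    using span_dependent[OF assms(1-3), of M v w] \<open>\<not> card K \<le> card J\<close> by auto
  then show False
    using assms(4) unfolding lin_indep_on_def by blast
qed

section \<open>p-adic absolute values\<close>

locale padic =
  fixes p :: nat and absv :: "'k::field_char_0 \<Rightarrow> real"
  assumes prime_p: "prime p" and padic_absv: "padic_absv p absv"

sublocale padic \<subseteq> nonarch_absv absv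
  using padic_absv unfolding padic_absv_def by unfold_locales auto

context padic
begin

lemma p_gt_1: "p > 1"
  using prime_p prime_gt_1_nat by blast

lemma absv_of_nat_p: "absv (of_nat p) = 1 / real p"
  using padic_absv unfolding padic_absv_def by blast

lemma absv_of_nat_p_power: "absv (of_nat p ^ n) = (1 / real p) ^ n"
  by (simp add: absv_power absv_of_nat_p)

lemma cauchy_converges:
  "\<forall>\<epsilon>>0. \<exists>N. \<forall>m\<ge>N. \<forall>n\<ge>N. absv (X m - X n) < \<epsilon> \<Longrightarrow> \<exists>L. converges X L"
  using padic_absv unfolding padic_absv_def by blast

lemma prime_int_p: "prime (int p)"
  using prime_p by simp

lemma absv_of_int_dvd: "int p dvd n \<Longrightarrow> absv (of_int n) \<le> 1 / real p"
  using absv_of_int_le_1[of "n div int p"] p_gt_1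
  by (auto simp: absv_of_nat_p divide_right_mono elim!: dvdE)

lemma int_inverse_mod_p:
  assumes "\<not> int p dvd n"
  obtains u where "int p dvd u * n - 1"
proof -
  have "coprime n (int p)"
    using prime_imp_coprime[OF prime_int_p assms] by (simp add: coprime_commute)
  then obtain u v where "u * n + v * int p = 1"
    using bezout_int[of n "int p"] by auto
  then have "u * n - 1 = int p * (- v)"
    by (simp add: algebra_simps)
  then show ?thesis
    using that by (metis dvd_triv_left)
qed

text \<open>An inverse u of n modulo p makes u n a unit by the ultrametric inequality, and
  |u| \<le> 1 forces |n| = 1.\<close>
lemma absv_of_int_not_dvd:
  assumes "\<not> int p dvd n"
  shows "absv (of_int n) = 1"
proof -
  obtain u where "int p dvd u * n - 1"
    using assms by (rule int_inverse_mod_p)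
  then have "absv (of_int (u * n - 1)) \<le> 1 / real p"
    by (rule absv_of_int_dvd)
  moreover have "1 / real p < 1"
    using p_gt_1 by simp
  ultimately have "absv (of_int (u * n - 1)) < 1"
    by linarith
  then have "absv (1 + of_int (u * n - 1)) = 1"
    using absv_add_eq_left[of "of_int (u * n - 1)" 1] by simp
  then have "absv (of_int u) * absv (of_int n) = 1"
    by (simp flip: absv_mult)
  then show ?thesis
    using absv_of_int_le_1[of u] absv_of_int_le_1[of n]
      mult_left_le_one_le[of "absv (of_int n)" "absv (of_int u)"] by simp
qed

lemma absv_of_int_less_1_iff: "absv (of_int n) < 1 \<longleftrightarrow> int p dvd n"
proof -
  have "1 / real p < 1"
    using p_gt_1 by simp
  then show ?thesis
    using absv_of_int_not_dvd[of n] absv_of_int_dvd[of n] by (cases "int p dvd n") auto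
qed

lemma absv_of_int:
  assumes "n \<noteq> 0"
  shows "absv (of_int n) = (1 / real p) ^ multiplicity (int p) n"
proof -
  define k where "k = multiplicity (int p) n"
  obtain m where "n = int p ^ k * m" "\<not> int p dvd m"
    unfolding k_def using multiplicity_decompose'[of n "int p"] assms prime_int_p not_prime_unit by metis
  then have "absv (of_int n) = absv (of_nat p) ^ k * absv (of_int m)"
    by (simp add: absv_power)
  then show ?thesis
    unfolding k_def[symmetric] using \<open>\<not> int p dvd m\<close> by (simp add: absv_of_int_not_dvd absv_of_nat_p)
qed

lemma absv_of_rat:
  assumes "r \<noteq> 0"
  shows "\<exists>z::int. absv (of_rat r) = real p powr z"
proof -
  obtain a b where ab: "quotient_of r = (a, b)"
    by (cases "quotient_of r")
  then have "r = of_int a / of_int b" "a \<noteq> 0" "b \<noteq> 0"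
    using assms quotient_of_div[OF ab] quotient_of_denom_pos[OF ab] by auto
  then have "absv (of_rat r) = (1 / real p) ^ multiplicity (int p) a / (1 / real p) ^ multiplicity (int p) b"
    by (simp add: of_rat_divide absv_divide absv_of_int)
  also have "\<dots> = real p powr (- real (multiplicity (int p) a)) / real p powr (- real (multiplicity (int p) b))"
    using p_gt_1 by (simp add: powr_minus powr_realpow power_one_over field_simps)
  also have "\<dots> = real p powr (int (multiplicity (int p) b) - int (multiplicity (int p) a))"
    by (simp add: powr_diff[symmetric])
  finally show ?thesis
    by blast
qed

lemma converges_geometric:
  assumes "\<And>n. absv (X (Suc n) - X n) \<le> C * \<rho> ^ n" "0 \<le> \<rho>" "\<rho> < 1"
  obtains L where "converges X L"
proof -
  have "\<exists>N. \<forall>m\<ge>N. \<forall>n\<ge>N. absv (X m - X n) < \<epsilon>" if "\<epsilon> > 0" for \<epsilon>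
  proof -
    have "(\<lambda>n. C * \<rho> ^ n) \<longlonglongrightarrow> 0"
      using assms(2,3) by (intro tendsto_mult_right_zero LIMSEQ_power_zero) simp
    then have "eventually (\<lambda>n. C * \<rho> ^ n < \<epsilon>) sequentially"
      using \<open>\<epsilon> > 0\<close> by (rule order_tendstoD)
    then obtain N where N: "C * \<rho> ^ N < \<epsilon>"
      by (auto simp: eventually_sequentially)
    have less: "absv (X m - X n) < \<epsilon>" if "n \<le> m" "N \<le> n" for m n
    proof -
      have "C \<ge> 0"
        using order_trans[OF absv_nonneg assms(1)[of 0]] by simp
      then have "C * \<rho> ^ n \<le> C * \<rho> ^ N"
        using assms(2,3) that(2) by (intro mult_left_mono power_decreasing) auto
      then show ?thesis
        using absv_diff_le_geometric[OF assms(1,2) _ that(1)] assms(3) N by simp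
    qed
    have "absv (X m - X n) < \<epsilon>" if "N \<le> m" "N \<le> n" for m n
      using less[of n m] less[of m n] that absv_minus_commute[of "X m" "X n"] by (cases "n \<le> m") auto
    then show ?thesis
      by blast
  qed
  then show ?thesis
    using cauchy_converges that by blast
qed

lemma Qp_in_iff: "x \<in> Qp_in absv \<longleftrightarrow> (\<exists>r. converges (\<lambda>n. of_rat (r n)) x)"
  unfolding Qp_in_def by simp

lemma Qp_inI: "converges (\<lambda>n. of_rat (r n)) x \<Longrightarrow> x \<in> Qp_in absv"
  unfolding Qp_in_iff by blast

lemma Qp_in_of_rat [simp]: "of_rat r \<in> Qp_in absv"
  using converges_const[of "of_rat r"] by (rule Qp_inI)

lemma Qp_in_of_int [simp]: "of_int n \<in> Qp_in absv"
  using Qp_in_of_rat[of "of_int n"] by simp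

lemma Qp_in_of_nat [simp]: "of_nat n \<in> Qp_in absv"
  using Qp_in_of_rat[of "of_nat n"] by simp

lemma Qp_in_add:
  assumes "x \<in> Qp_in absv" "y \<in> Qp_in absv"
  shows "x + y \<in> Qp_in absv"
proof -
  obtain r s where "converges (\<lambda>n. of_rat (r n)) x" "converges (\<lambda>n. of_rat (s n)) y"
    using assms unfolding Qp_in_iff by blast
  then have "converges (\<lambda>n. of_rat (r n + s n)) (x + y)"
    unfolding of_rat_add by (rule converges_add)
  then show ?thesis
    by (rule Qp_inI)
qed

lemma Qp_in_mult:
  assumes "x \<in> Qp_in absv" "y \<in> Qp_in absv"
  shows "x * y \<in> Qp_in absv"
proof -
  obtain r s where "converges (\<lambda>n. of_rat (r n)) x" "converges (\<lambda>n. of_rat (s n)) y"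
    using assms unfolding Qp_in_iff by blast
  then have "converges (\<lambda>n. of_rat (r n * s n)) (x * y)"
    unfolding of_rat_mult by (rule converges_mult)
  then show ?thesis
    by (rule Qp_inI)
qed

lemma Qp_in_minus:
  assumes "x \<in> Qp_in absv"
  shows "- x \<in> Qp_in absv"
proof -
  obtain r where "converges (\<lambda>n. of_rat (r n)) x"
    using assms unfolding Qp_in_iff by blast
  then have "converges (\<lambda>n. of_rat (- r n)) (- x)"
    unfolding of_rat_minus by (rule converges_minus)
  then show ?thesis
    by (rule Qp_inI)
qed

lemma Qp_in_inverse:
  assumes "x \<in> Qp_in absv"
  shows "inverse x \<in> Qp_in absv"
proof (cases "x = 0")
  case False
  obtain r where "converges (\<lambda>n. of_rat (r n)) x"
    using assms unfolding Qp_in_iff by blast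
  then have "converges (\<lambda>n. of_rat (inverse (r n))) (inverse x)"
    unfolding of_rat_inverse using False by (rule converges_inverse)
  then show ?thesis
    by (rule Qp_inI)
qed (use Qp_in_of_nat[of 0] in simp)

lemma subfield_Qp_in: "subfield (Qp_in absv)"
  using Qp_in_of_nat[of 0] Qp_in_of_nat[of 1]
  unfolding subfield_def by (simp add: Qp_in_add Qp_in_mult Qp_in_minus Qp_in_inverse)

lemma Qp_in_closed:
  assumes "\<And>n. X n \<in> Qp_in absv" "converges X L"
  shows "L \<in> Qp_in absv"
proof -
  have "\<exists>q. absv (X n - of_rat q) < inverse (real (Suc n))" for n
  proof -
    obtain r where "converges (\<lambda>k. of_rat (r k)) (X n)"
      using assms(1) unfolding Qp_in_iff by blast
    from convergesD[OF this, of "inverse (real (Suc n))"]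
    obtain N where "\<forall>k\<ge>N. absv (of_rat (r k) - X n) < inverse (real (Suc n))"
      by (auto simp: eventually_sequentially)
    then have "absv (X n - of_rat (r N)) < inverse (real (Suc n))"
      using absv_minus_commute[of "X n" "of_rat (r N)"] by simp
    then show ?thesis
      by blast
  qed
  then obtain q where q: "\<And>n. absv (X n - of_rat (q n)) < inverse (real (Suc n))"
    by metis
  have "converges (\<lambda>n. of_rat (q n)) L"
    unfolding converges_iff_eventually
  proof (intro allI impI)
    fix \<epsilon> :: real
    assume "\<epsilon> > 0"
    then have "eventually (\<lambda>n. absv (X n - L) < \<epsilon> \<and> inverse (real (Suc n)) < \<epsilon>) sequentially"
      using assms(2) LIMSEQ_inverse_real_of_nat by (intro eventually_conj convergesD order_tendstoD(2))
    then show "eventually (\<lambda>n. absv (of_rat (q n) - L) < \<epsilon>) sequentially"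
    proof (rule eventually_mono)
      fix n
      assume "absv (X n - L) < \<epsilon> \<and> inverse (real (Suc n)) < \<epsilon>"
      then show "absv (of_rat (q n) - L) < \<epsilon>"
        using q[of n] absv_triangle[of "of_rat (q n)" L "X n"] absv_minus_commute[of "of_rat (q n)" "X n"]
        by linarith
    qed
  qed
  then show ?thesis
    by (rule Qp_inI)
qed

lemma Zp_in_closed:
  assumes "\<And>n. X n \<in> Zp_in absv" "converges X L"
  shows "L \<in> Zp_in absv"
  using assms Qp_in_closed[of X L] converges_absv_le[of X L 1] unfolding Zp_in_def by blast

lemma Qp_in_algebraic:
  assumes "x \<in> Qp_in absv"
  shows "\<exists>q::'k poly. q \<noteq> 0 \<and> (\<forall>i. coeff q i \<in> Qp_in absv) \<and> poly q x = 0"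
proof (intro exI[of _ "[:- x, 1:]"] conjI allI)
  fix i
  show "coeff [:- x, 1:] i \<in> Qp_in absv"
    using assms subfield_Qp_in Qp_in_of_nat[of 0] Qp_in_of_nat[of 1]
    by (auto simp: coeff_pCons subfield_closed split: nat.splits)
qed simp_all

lemma absv_Qp_in:
  assumes "x \<in> Qp_in absv" "x \<noteq> 0"
  obtains z :: int where "absv x = real p powr z"
proof -
  obtain r where "converges (\<lambda>n. of_rat (r n)) x"
    using assms(1) unfolding Qp_in_iff by blast
  from convergesD[OF this, of "absv x"] assms(2)
  obtain N where "\<forall>n\<ge>N. absv (of_rat (r n) - x) < absv x"
    by (auto simp: eventually_sequentially)
  then have "absv (x + (of_rat (r N) - x)) = absv x"
    by (intro absv_add_eq_left) simp
  then have "absv (of_rat (r N)) = absv x"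
    by simp
  with assms(2) absv_of_rat[of "r N"] show ?thesis
    using that by force
qed

lemma Zp_in_residue_int:
  assumes "x \<in> Qp_in absv" "absv x \<le> 1"
  obtains n :: int where "absv (x - of_int n) < 1"
proof -
  obtain r where "converges (\<lambda>n. of_rat (r n)) x"
    using assms(1) unfolding Qp_in_iff by blast
  from convergesD[OF this, of 1] obtain N where "\<forall>n\<ge>N. absv (of_rat (r n) - x) < 1"
    by (auto simp: eventually_sequentially)
  then have xq: "absv (x - of_rat (r N)) < 1"
    using absv_minus_commute[of x] by auto
  have q_le: "absv (of_rat (r N)) \<le> 1"
    using absv_add_le[of x 1 "of_rat (r N) - x"] assms(2) xq absv_minus_commute[of x] by simp
  obtain a b where ab: "quotient_of (r N) = (a, b)"
    by (cases "quotient_of (r N)")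
  have q: "of_rat (r N) = (of_int a / of_int b :: 'k)" "b > 0" "coprime a b"
    using quotient_of_div[OF ab] quotient_of_denom_pos[OF ab] quotient_of_coprime[OF ab]
    by (simp_all add: of_rat_divide)
  have "\<not> int p dvd b"
  proof
    assume "int p dvd b"
    then have "\<not> int p dvd a"
      using q(3) prime_int_p not_prime_unit coprime_common_divisor by blast
    then have "absv (of_rat (r N)) = 1 / absv (of_int b)"
      using q(1) by (simp add: absv_divide absv_of_int_not_dvd)
    moreover have "0 < absv (of_int b)" "absv (of_int b) < 1"
      using q(2) \<open>int p dvd b\<close> absv_of_int_less_1_iff by auto
    ultimately show False
      using q_le by simp
  qed
  then obtain u where u: "int p dvd u * b - 1"
    by (rule int_inverse_mod_p)
  then have "absv (of_int (a * (1 - u * b)) :: 'k) < 1"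
    using absv_of_int_less_1_iff by (metis dvd_mult dvd_minus_iff minus_diff_eq)
  moreover have "of_rat (r N) - of_int (a * u) = (of_int (a * (1 - u * b)) :: 'k) / of_int b"
    using q(1,2) by (simp add: field_simps)
  ultimately have "absv (of_rat (r N) - of_int (a * u)) < 1"
    using \<open>\<not> int p dvd b\<close> by (simp add: absv_divide absv_of_int_not_dvd)
  then have "absv (x - of_int (a * u)) < 1"
    using absv_add_less[OF xq] by fastforce
  then show ?thesis
    by (rule that)
qed

text \<open>The elements r 0, ..., r (t - 1) are integral and their residues are linearly
  independent over the prime field.\<close>
definition residue_independent :: "nat \<Rightarrow> (nat \<Rightarrow> 'k) \<Rightarrow> bool" where
  "residue_independent t r \<longleftrightarrow> (\<forall>j<t. absv (r j) \<le> 1) \<and>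
     (\<forall>n::nat \<Rightarrow> int. absv (\<Sum>j<t. of_int (n j) * r j) < 1 \<longrightarrow> (\<forall>j<t. int p dvd n j))"

lemma absv_residue_independent_int_combination:
  assumes "residue_independent t r" "j < t" "\<not> int p dvd n j"
  shows "absv (\<Sum>j<t. of_int (n j) * r j) = 1"
proof -
  have "absv (\<Sum>j<t. of_int (n j) * r j) \<le> 1"
    using assms(1) unfolding residue_independent_def
    by (intro absv_sum_le) (auto intro: mult_le_one absv_of_int_le_1)
  moreover have "\<not> absv (\<Sum>j<t. of_int (n j) * r j) < 1"
    using assms unfolding residue_independent_def by blast
  ultimately show ?thesis
    by simp
qed

lemma absv_residue_independent_unit_combination:
  assumes "residue_independent t r" "\<forall>j<t. c j \<in> Qp_in absv \<and> absv (c j) \<le> 1" "j0 < t" "absv (c j0) = 1"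
  shows "absv (\<Sum>j<t. c j * r j) = 1"
proof -
  have "\<exists>m. absv (c j - of_int m) < 1" if "j < t" for j
    using Zp_in_residue_int[of "c j"] assms(2) that by blast
  then obtain n where n: "\<forall>j<t. absv (c j - of_int (n j)) < 1"
    by metis
  have "absv (of_int (n j0)) = 1"
    using n assms(3,4) absv_add_eq_left[of "of_int (n j0) - c j0" "c j0"] absv_minus_commute by auto
  then have "absv (\<Sum>j<t. of_int (n j) * r j) = 1"
    using assms(1,3) absv_of_int_less_1_iff[of "n j0"] absv_residue_independent_int_combination by auto
  moreover have "absv (\<Sum>j<t. (c j - of_int (n j)) * r j) < 1"
    using n assms(1) unfolding residue_independent_def by (intro absv_sum_less absv_mult_less_1) auto
  moreover have "(\<Sum>j<t. c j * r j) = (\<Sum>j<t. of_int (n j) * r j) + (\<Sum>j<t. (c j - of_int (n j)) * r j)"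
    by (simp add: sum.distrib[symmetric] algebra_simps)
  ultimately show ?thesis
    by (simp add: absv_add_eq_left)
qed

text \<open>Dividing by a coefficient of maximal absolute value reduces to the unit case.\<close>
lemma absv_residue_independent_combination:
  assumes "residue_independent t r" "\<forall>j<t. c j \<in> Qp_in absv" "\<exists>j<t. c j \<noteq> 0"
  obtains z :: int where "absv (\<Sum>j<t. c j * r j) = real p powr z"
proof -
  obtain j0 where j0: "j0 < t" "Max ((\<lambda>j. absv (c j)) ` {..<t}) = absv (c j0)"
    using obtains_MAX[of "{..<t}" "\<lambda>j. absv (c j)"] assms(3) by blast
  then have max: "absv (c j) \<le> absv (c j0)" if "j < t" for j
    using that j0(2)[symmetric] by (simp add: Max_ge)
  obtain j1 where "j1 < t" "c j1 \<noteq> 0"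
    using assms(3) by blast
  then have "c j0 \<noteq> 0"
    using max[of j1] absv_pos_iff[of "c j1"] by fastforce
  have "absv (\<Sum>j<t. c j / c j0 * r j) = 1"
  proof (rule absv_residue_independent_unit_combination[OF assms(1) _ j0(1)])
    show "\<forall>j<t. c j / c j0 \<in> Qp_in absv \<and> absv (c j / c j0) \<le> 1"
      using assms(2) j0(1) max \<open>c j0 \<noteq> 0\<close> subfield_Qp_in by (simp add: absv_divide subfield_closed)
  qed (use \<open>c j0 \<noteq> 0\<close> in \<open>simp add: absv_divide\<close>)
  moreover have "(\<Sum>j<t. c j * r j) = c j0 * (\<Sum>j<t. c j / c j0 * r j)"
    using \<open>c j0 \<noteq> 0\<close> by (simp add: sum_distrib_left)
  ultimately have "absv (\<Sum>j<t. c j * r j) = absv (c j0)"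
    by simp
  moreover obtain z :: int where "absv (c j0) = real p powr z"
    using absv_Qp_in[of "c j0"] assms(2) j0(1) \<open>c j0 \<noteq> 0\<close> by blast
  ultimately show ?thesis
    using that by simp
qed

lemma residue_independent_lin_indep:
  assumes "residue_independent t r"
  shows "lin_indep_on (Qp_in absv) {..<t} r"
  unfolding lin_indep_on_def
proof (intro allI impI ballI)
  fix c j
  assume "\<forall>j\<in>{..<t}. c j \<in> Qp_in absv" "(\<Sum>j\<in>{..<t}. c j * r j) = 0" "j \<in> {..<t}"
  then show "c j = 0"
    using absv_residue_independent_combination[OF assms, of c] p_gt_1 by force
qed

lemma absv_power_p_diff_le:
  assumes "absv x \<le> 1" "absv y \<le> 1"
  shows "absv (x ^ p - y ^ p) \<le> absv (x - y) * max (1 / real p) (absv (x - y))"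
proof -
  define S where "S = (\<Sum>i<p. y ^ (p - Suc i) * x ^ i)"
  have "x ^ p - y ^ p = (x - y) * S"
    unfolding S_def by (rule power_diff_sumr2)
  have "y ^ (p - Suc i) * y ^ i = y ^ (p - 1)" if "i < p" for i
    using that by (simp flip: power_add)
  then have "S - of_nat p * y ^ (p - 1) = (\<Sum>i<p. y ^ (p - Suc i) * (x ^ i - y ^ i))"
    unfolding S_def by (simp add: right_diff_distrib sum_subtractf)
  also have "absv \<dots> \<le> absv (x - y)"
  proof (rule absv_sum_le)
    fix i
    have "absv (y ^ (p - Suc i)) \<le> 1"
      using assms(2) by (simp add: absv_power power_le_one)
    then have "absv (y ^ (p - Suc i) * (x ^ i - y ^ i)) \<le> absv (x ^ i - y ^ i)"
      by (simp add: mult_left_le_one_le)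
    also have "\<dots> \<le> absv (x - y)"
      by (rule absv_power_diff_le[OF assms])
    finally show "absv (y ^ (p - Suc i) * (x ^ i - y ^ i)) \<le> absv (x - y)" .
  qed simp
  finally have "absv (S - of_nat p * y ^ (p - 1)) \<le> max (1 / real p) (absv (x - y))"
    by simp
  moreover have "absv (y ^ (p - 1)) \<le> 1"
    using assms(2) by (simp add: absv_power power_le_one)
  then have "absv (of_nat p * y ^ (p - 1)) \<le> 1 / real p"
    unfolding absv_mult absv_of_nat_p using p_gt_1 by (simp add: divide_right_mono)
  then have "absv (of_nat p * y ^ (p - 1)) \<le> max (1 / real p) (absv (x - y))"
    by simp
  ultimately have "absv (S - of_nat p * y ^ (p - 1) + of_nat p * y ^ (p - 1)) \<le> max (1 / real p) (absv (x - y))"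
    by (rule absv_add_le)
  then show ?thesis
    unfolding \<open>x ^ p - y ^ p = (x - y) * S\<close> by (simp add: mult_left_mono)
qed

lemma absv_power_p_power_diff_le:
  assumes "absv x \<le> 1" "absv y \<le> 1"
  shows "absv (x ^ (p ^ k) - y ^ (p ^ k)) \<le> max (1 / real p) (absv (x - y)) ^ k * absv (x - y)"
proof (induction k)
  case (Suc k)
  define \<rho> where "\<rho> = max (1 / real p) (absv (x - y))"
  have "absv (x - y) \<le> 1"
    using absv_diff_le_max[of x y] assms by simp
  then have "0 \<le> \<rho>" "\<rho> \<le> 1"
    unfolding \<rho>_def using p_gt_1 by (auto simp: le_max_iff_disj)
  have pow: "absv (x ^ (p ^ k)) \<le> 1" "absv (y ^ (p ^ k)) \<le> 1"
    using assms by (simp_all add: absv_power power_le_one)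
  have IH: "absv (x ^ (p ^ k) - y ^ (p ^ k)) \<le> \<rho> ^ k * absv (x - y)"
    using Suc.IH unfolding \<rho>_def .
  also have "\<dots> \<le> absv (x - y)"
    using \<open>0 \<le> \<rho>\<close> \<open>\<rho> \<le> 1\<close> by (simp add: mult_left_le_one_le power_le_one)
  finally have "max (1 / real p) (absv (x ^ (p ^ k) - y ^ (p ^ k))) \<le> \<rho>"
    unfolding \<rho>_def by auto
  moreover have "0 \<le> \<rho> ^ k * absv (x - y)"
    using \<open>0 \<le> \<rho>\<close> by simp
  moreover have "0 \<le> max (1 / real p) (absv (x ^ (p ^ k) - y ^ (p ^ k)))"
    by (simp add: le_max_iff_disj)
  ultimately have "absv (x ^ (p ^ k) - y ^ (p ^ k)) * max (1 / real p) (absv (x ^ (p ^ k) - y ^ (p ^ k)))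
      \<le> \<rho> ^ k * absv (x - y) * \<rho>"
    using IH by (intro mult_mono)
  then have "absv ((x ^ (p ^ k)) ^ p - (y ^ (p ^ k)) ^ p) \<le> \<rho> ^ k * absv (x - y) * \<rho>"
    using absv_power_p_diff_le[OF pow] by linarith
  then show ?case
    unfolding \<rho>_def by (simp add: power_mult[symmetric] mult.commute mult.left_commute)
qed simp

lemma absv_root_of_unity_eq_1:
  assumes "z ^ m = 1" "m > 0"
  shows "absv z = 1"
proof (rule power_eq_imp_eq_base)
  show "absv z ^ m = 1 ^ m"
    using assms(1) by (simp flip: absv_power)
qed (use assms(2) in simp_all)

text \<open>Roots of unity of order prime to p are separated by the residue map: the quotient v
  of two congruent ones satisfies 0 = v^m - 1 = (v - 1)(1 + v + ... + v^(m-1)), and the second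
  factor is congruent to the unit m.\<close>
lemma root_of_unity_eq_if_close:
  assumes "z ^ m = 1" "w ^ m = 1" "\<not> p dvd m" "absv (z - w) < 1"
  shows "z = w"
proof -
  have "m > 0"
    using assms(3) by (cases m) auto
  have "absv z = 1" "absv w = 1"
    using absv_root_of_unity_eq_1 assms(1,2) \<open>m > 0\<close> by blast+
  then have "w \<noteq> 0"
    by auto
  define v where "v = z / w"
  have "v ^ m = 1"
    unfolding v_def using assms(1,2) by (simp add: power_divide)
  have "v - 1 = (z - w) / w"
    unfolding v_def using \<open>w \<noteq> 0\<close> by (simp add: field_simps)
  then have "absv (v - 1) < 1"
    using assms(4) \<open>absv w = 1\<close> by (simp add: absv_divide)
  have "absv v = 1"
    using \<open>absv z = 1\<close> \<open>absv w = 1\<close> unfolding v_def by (simp add: absv_divide)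
  define S where "S = (\<Sum>i<m. v ^ i)"
  have "S - of_nat m = (\<Sum>i<m. v ^ i - 1 ^ i)"
    unfolding S_def by (simp add: sum_subtractf)
  also have "absv \<dots> < 1"
    using absv_power_diff_le[of v 1] \<open>absv v = 1\<close> \<open>absv (v - 1) < 1\<close>
    by (intro absv_sum_less) (auto intro: order.strict_trans1)
  finally have "absv (S - of_nat m) < 1" .
  moreover have "absv (of_nat m :: 'k) = 1"
    using absv_of_int_not_dvd[of "int m"] assms(3) by simp
  ultimately have "absv (of_nat m + (S - of_nat m)) = 1"
    using absv_add_eq_left[of "S - of_nat m" "of_nat m"] by simp
  then have "S \<noteq> 0"
    by auto
  moreover have "(v - 1) * S = v ^ m - 1"
    unfolding S_def by (simp add: power_diff_1_eq mult.commute)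
  ultimately have "v = 1"
    using \<open>v ^ m = 1\<close> by simp
  then show ?thesis
    using \<open>w \<noteq> 0\<close> unfolding v_def by simp
qed

end

section \<open>The residue field and Teichmueller representatives\<close>

locale padic_finite_ext = padic p absv for p and absv :: "'k::field_char_0 \<Rightarrow> real" +
  fixes d :: nat
  assumes ext_degree: "ext_degree (Qp_in absv) d"
begin

lemma ext_degree_basis:
  obtains b where "lin_indep_on (Qp_in absv) {..<d} b" "\<And>x. in_span_on (Qp_in absv) {..<d} b x"
proof -
  obtain bs :: "'k list" where
    "\<forall>c. (\<forall>i<d. c i \<in> Qp_in absv) \<longrightarrow> (\<Sum>i<d. c i * bs ! i) = 0 \<longrightarrow> (\<forall>i<d. c i = 0)"
    "\<forall>x. \<exists>c. (\<forall>i<d. c i \<in> Qp_in absv) \<and> x = (\<Sum>i<d. c i * bs ! i)"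
    using ext_degree unfolding ext_degree_def by blast
  then show ?thesis
    by (intro that[of "\<lambda>i. bs ! i"]) (auto simp: lin_indep_on_def in_span_on_def Ball_def)
qed

lemma residue_independent_le_degree:
  assumes "residue_independent t r"
  shows "t \<le> d"
proof -
  obtain b where "\<And>x. in_span_on (Qp_in absv) {..<d} b x"
    using ext_degree_basis by blast
  then have "card {..<t} \<le> card {..<d}"
    using residue_independent_lin_indep[OF assms] subfield_Qp_in
    by (intro card_le_if_lin_indep_in_span) auto
  then show ?thesis
    by simp
qed

text \<open>The residue field is never constructed: its degree f over the prime field is the
  largest size of a residue independent family, and residue_basis lifts a basis of it.\<close>
definition residue_degree :: nat where
  "residue_degree = Max {t. \<exists>r. residue_independent t r}"

definition residue_basis :: "nat \<Rightarrow> 'k" where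
  "residue_basis = (SOME r. residue_independent residue_degree r)"

lemma residue_independent_one: "residue_independent 1 (\<lambda>_. 1)"
  unfolding residue_independent_def using absv_of_int_less_1_iff by auto

lemma
  shows residue_independent_residue_basis: "residue_independent residue_degree residue_basis"
    and residue_degree_maximal: "residue_independent t r \<Longrightarrow> t \<le> residue_degree"
    and residue_degree_pos: "residue_degree > 0"
proof -
  define T where "T = {t. \<exists>r. residue_independent t r}"
  have "T \<subseteq> {..d}"
    unfolding T_def using residue_independent_le_degree by auto
  then have fin: "finite T"
    by (rule finite_subset) simp
  have "1 \<in> T"
    unfolding T_def using residue_independent_one by blast
  show max: "t \<le> residue_degree" if "residue_independent t r" for t r
  proof -
    have "t \<in> T"
      unfolding T_def using that by blast
    then show ?thesis
      unfolding residue_degree_def T_def[symmetric] using fin by simp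
  qed
  have "residue_degree \<in> T"
    unfolding residue_degree_def T_def[symmetric] using fin \<open>1 \<in> T\<close> by (metis Max_in empty_iff)
  then obtain r where "residue_independent residue_degree r"
    unfolding T_def by blast
  then show "residue_independent residue_degree residue_basis"
    unfolding residue_basis_def by (rule someI[of "residue_independent residue_degree"])
  show "residue_degree > 0"
    using max[OF residue_independent_one] by simp
qed

text \<open>Otherwise multiplying by an inverse of m modulo p would make x congruent to an
  integral combination of the r j.\<close>
lemma residue_coeff_dvd:
  assumes "absv x \<le> 1" "\<And>n. \<not> absv (x - (\<Sum>j<t. of_int (n j) * r j)) < 1"
    and small: "absv ((\<Sum>j<t. of_int (n j) * r j) + of_int m * x) < 1"
  shows "int p dvd m"
proof (rule ccontr)
  assume "\<not> int p dvd m"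
  then obtain u where u: "int p dvd u * m - 1"
    by (rule int_inverse_mod_p)
  have "absv (((\<Sum>j<t. of_int (n j) * r j) + of_int m * x) * of_int u) < 1"
    by (rule absv_mult_less_1[OF small absv_of_int_le_1])
  then have "absv (of_int u * ((\<Sum>j<t. of_int (n j) * r j) + of_int m * x)) < 1"
    by (simp only: mult.commute)
  moreover have "absv (of_int (u * m - 1)) < 1"
    using u absv_of_int_less_1_iff by blast
  then have "absv (- (of_int (u * m - 1) * x)) < 1"
    using absv_mult_less_1[OF _ assms(1)] by (simp only: absv_minus)
  ultimately have "absv (of_int u * ((\<Sum>j<t. of_int (n j) * r j) + of_int m * x) + - (of_int (u * m - 1) * x)) < 1"
    by (rule absv_add_less)
  moreover have "of_int u * ((\<Sum>j<t. of_int (n j) * r j) + of_int m * x) + - (of_int (u * m - 1) * x)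
      = x - (\<Sum>j<t. of_int (- u * n j) * r j)"
    by (simp add: algebra_simps sum_distrib_left sum_negf)
  ultimately show False
    using assms(2)[of "\<lambda>j. - u * n j"] by simp
qed

lemma residue_independent_extend:
  assumes "residue_independent t r" "absv x \<le> 1"
    and "\<And>n. \<not> absv (x - (\<Sum>j<t. of_int (n j) * r j)) < 1"
  shows "residue_independent (Suc t) (r(t := x))"
  unfolding residue_independent_def
proof (intro conjI allI impI)
  show "absv ((r(t := x)) j) \<le> 1" if "j < Suc t" for j
    using that assms(1,2) unfolding residue_independent_def by (auto simp: less_Suc_eq)
  fix n j
  assume "absv (\<Sum>j<Suc t. of_int (n j) * (r(t := x)) j) < 1" "j < Suc t"
  moreover have "(\<Sum>j<Suc t. of_int (n j) * (r(t := x)) j) = (\<Sum>j<t. of_int (n j) * r j) + of_int (n t) * x"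
    by simp
  ultimately have small: "absv ((\<Sum>j<t. of_int (n j) * r j) + of_int (n t) * x) < 1"
    by simp
  then have "int p dvd n t"
    using assms(2,3) by (rule residue_coeff_dvd[rotated 2])
  then have "absv (of_int (n t)) < 1"
    using absv_of_int_less_1_iff by blast
  then have "absv (- (of_int (n t) * x)) < 1"
    using absv_mult_less_1[OF _ assms(2)] by (simp only: absv_minus)
  with small have "absv (((\<Sum>j<t. of_int (n j) * r j) + of_int (n t) * x) + - (of_int (n t) * x)) < 1"
    by (rule absv_add_less)
  then have "absv (\<Sum>j<t. of_int (n j) * r j) < 1"
    by simp
  then show "int p dvd n j"
    using assms(1) \<open>int p dvd n t\<close> \<open>j < Suc t\<close> unfolding residue_independent_def by (auto simp: less_Suc_eq)
qed

lemma residue_basis_spans: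
  assumes "absv x \<le> 1"
  obtains n where "absv (x - (\<Sum>j<residue_degree. of_int (n j) * residue_basis j)) < 1"
proof -
  have "\<not> residue_independent (Suc residue_degree) (residue_basis(residue_degree := x))"
    using residue_degree_maximal[of "Suc residue_degree"] by auto
  then obtain n where "absv (x - (\<Sum>j<residue_degree. of_int (n j) * residue_basis j)) < 1"
    using residue_independent_extend[OF residue_independent_residue_basis assms] by blast
  then show ?thesis
    by (rule that)
qed

abbreviation residue_card :: nat where
  "residue_card \<equiv> p ^ residue_degree"

lemma residue_card_ge_2: "residue_card \<ge> 2"
proof -
  have "p ^ 1 \<le> p ^ residue_degree"
    using p_gt_1 residue_degree_pos by (intro power_increasing) auto
  then show ?thesis
    using p_gt_1 by simp
qed

definition residue_digits :: "nat list set" where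
  "residue_digits = {xs. set xs \<subseteq> {..<p} \<and> length xs = residue_degree}"

definition residue_rep :: "nat list \<Rightarrow> 'k" where
  "residue_rep xs = (\<Sum>j<residue_degree. of_nat (xs ! j) * residue_basis j)"

lemma finite_residue_digits: "finite residue_digits"
  unfolding residue_digits_def by (rule finite_lists_length_eq) simp

lemma card_residue_digits: "card residue_digits = residue_card"
  unfolding residue_digits_def using card_lists_length_eq[of "{..<p}"] by simp

lemma absv_residue_rep_le_1: "absv (residue_rep xs) \<le> 1"
  unfolding residue_rep_def using residue_independent_residue_basis
  by (intro absv_sum_le) (auto simp: residue_independent_def intro: mult_le_one absv_of_nat_le_1)

lemma residue_rep_exists:
  assumes "absv x \<le> 1"
  obtains xs where "xs \<in> residue_digits" "absv (x - residue_rep xs) < 1"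
proof -
  obtain n where n: "absv (x - (\<Sum>j<residue_degree. of_int (n j) * residue_basis j)) < 1"
    using residue_basis_spans[OF assms] by blast
  define xs where "xs = map (\<lambda>j. nat (n j mod int p)) [0..<residue_degree]"
  have "xs \<in> residue_digits"
    unfolding residue_digits_def xs_def using p_gt_1 by (auto simp: nat_less_iff)
  have "residue_rep xs - (\<Sum>j<residue_degree. of_int (n j) * residue_basis j)
      = (\<Sum>j<residue_degree. of_int (n j mod int p - n j) * residue_basis j)"
    unfolding residue_rep_def xs_def using p_gt_1 by (simp add: sum_subtractf[symmetric] algebra_simps)
  also have "absv \<dots> < 1"
  proof (intro absv_sum_less absv_mult_less_1)
    fix j
    assume "j \<in> {..<residue_degree}"
    have "int p dvd n j mod int p - n j"
      by (simp add: mod_eq_dvd_iff[symmetric])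
    then show "absv (of_int (n j mod int p - n j)) < 1"
      using absv_of_int_less_1_iff by blast
    show "absv (residue_basis j) \<le> 1"
      using residue_independent_residue_basis \<open>j \<in> _\<close> unfolding residue_independent_def by simp
  qed simp
  finally have "absv ((x - (\<Sum>j<residue_degree. of_int (n j) * residue_basis j))
      + - (residue_rep xs - (\<Sum>j<residue_degree. of_int (n j) * residue_basis j))) < 1"
    using n absv_minus_commute[of "residue_rep xs"] by (intro absv_add_less) simp_all
  then have "absv (x - residue_rep xs) < 1"
    by simp
  then show ?thesis
    using \<open>xs \<in> residue_digits\<close> that by blast
qed

lemma residue_rep_inj:
  assumes "xs \<in> residue_digits" "ys \<in> residue_digits" "absv (residue_rep xs - residue_rep ys) < 1"
  shows "xs = ys"
proof -
  define n where "n j = int (xs ! j) - int (ys ! j)" for j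
  have "residue_rep xs - residue_rep ys = (\<Sum>j<residue_degree. of_int (n j) * residue_basis j)"
    unfolding residue_rep_def n_def by (simp add: sum_subtractf[symmetric] algebra_simps)
  then have "absv (\<Sum>j<residue_degree. of_int (n j) * residue_basis j) < 1"
    using assms(3) by simp
  then have dvd: "\<forall>j<residue_degree. int p dvd n j"
    using residue_independent_residue_basis unfolding residue_independent_def by blast
  have len: "length xs = residue_degree" "length ys = residue_degree"
    using assms(1,2) unfolding residue_digits_def by simp_all
  have "xs ! j = ys ! j" if "j < residue_degree" for j
  proof -
    have "xs ! j \<in> set xs" "ys ! j \<in> set ys"
      using that len by simp_all
    then have "xs ! j < p" "ys ! j < p"
      using assms(1,2) unfolding residue_digits_def by auto
    moreover have "int (xs ! j) mod int p = int (ys ! j) mod int p"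
      using dvd that unfolding n_def by (simp add: mod_eq_dvd_iff)
    ultimately show ?thesis
      by simp
  qed
  then show ?thesis
    using len by (simp add: nth_equalityI)
qed

lemma absv_residue_rep_eq_1:
  assumes "xs \<in> residue_digits" "xs \<noteq> replicate residue_degree 0"
  shows "absv (residue_rep xs) = 1"
proof (rule ccontr)
  have zero: "replicate residue_degree 0 \<in> residue_digits" "residue_rep (replicate residue_degree 0) = 0"
    unfolding residue_digits_def residue_rep_def using p_gt_1 by auto
  assume "absv (residue_rep xs) \<noteq> 1"
  then have "absv (residue_rep xs - residue_rep (replicate residue_degree 0)) < 1"
    using absv_residue_rep_le_1[of xs] zero(2) by simp
  then show False
    using residue_rep_inj[OF assms(1) zero(1)] assms(2) by blast
qed

definition unit_residue_digits :: "nat list set" where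
  "unit_residue_digits = residue_digits - {replicate residue_degree 0}"

lemma card_unit_residue_digits: "card unit_residue_digits = residue_card - 1"
  unfolding unit_residue_digits_def using finite_residue_digits card_residue_digits p_gt_1
  by (auto simp: card_Diff_singleton_if residue_digits_def)

lemma residue_rep_mult_permutes:
  assumes "absv u = 1"
  obtains \<sigma> where "\<sigma> ` unit_residue_digits \<subseteq> unit_residue_digits" "inj_on \<sigma> unit_residue_digits"
    "\<And>xs. absv (u * residue_rep xs - residue_rep (\<sigma> xs)) < 1"
proof -
  have "\<exists>ys. ys \<in> residue_digits \<and> absv (u * residue_rep xs - residue_rep ys) < 1" for xs
    using residue_rep_exists[of "u * residue_rep xs"] assms absv_residue_rep_le_1 by auto
  then obtain \<sigma> where \<sigma>: "\<And>xs. \<sigma> xs \<in> residue_digits" "\<And>xs. absv (u * residue_rep xs - residue_rep (\<sigma> xs)) < 1"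
    by metis
  have "\<sigma> xs \<in> unit_residue_digits" if "xs \<in> unit_residue_digits" for xs
  proof -
    have "absv (u * residue_rep xs) = 1"
      using that assms absv_residue_rep_eq_1 unfolding unit_residue_digits_def by simp
    then have "residue_rep (\<sigma> xs) \<noteq> 0"
      using \<sigma>(2)[of xs] by auto
    then show ?thesis
      using \<sigma>(1) unfolding unit_residue_digits_def residue_rep_def by auto
  qed
  moreover have "inj_on \<sigma> unit_residue_digits"
  proof
    fix xs ys
    assume "xs \<in> unit_residue_digits" "ys \<in> unit_residue_digits" "\<sigma> xs = \<sigma> ys"
    then have "absv (u * residue_rep xs - u * residue_rep ys) < 1"
      using absv_add_less[OF \<sigma>(2)[of xs], of "residue_rep (\<sigma> ys) - u * residue_rep ys"]
        \<sigma>(2)[of ys] absv_minus_commute[of "u * residue_rep ys"] by simp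
    then have "absv (residue_rep xs - residue_rep ys) < 1"
      using assms by (simp flip: right_diff_distrib)
    then show "xs = ys"
      using residue_rep_inj \<open>xs \<in> unit_residue_digits\<close> \<open>ys \<in> unit_residue_digits\<close>
      unfolding unit_residue_digits_def by blast
  qed
  ultimately show ?thesis
    using that \<sigma>(2) by blast
qed

text \<open>Multiplication by the unit u permutes the nonzero residue classes, so the product
  of their representatives is unchanged modulo the maximal ideal.\<close>
lemma fermat_unit:
  assumes "absv u = 1"
  shows "absv (u ^ (residue_card - 1) - 1) < 1"
proof -
  obtain \<sigma> where \<sigma>: "\<sigma> ` unit_residue_digits \<subseteq> unit_residue_digits" "inj_on \<sigma> unit_residue_digits"
    "\<And>xs. absv (u * residue_rep xs - residue_rep (\<sigma> xs)) < 1"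
    using residue_rep_mult_permutes[OF assms] by blast
  have fin: "finite unit_residue_digits"
    unfolding unit_residue_digits_def using finite_residue_digits by simp
  define P where "P = (\<Prod>xs\<in>unit_residue_digits. residue_rep xs)"
  have "(\<Prod>xs\<in>unit_residue_digits. residue_rep (\<sigma> xs)) = P"
    unfolding P_def using prod.reindex[OF \<sigma>(2), of residue_rep] endo_inj_surj[OF fin \<sigma>(1,2)] by simp
  moreover have "absv ((\<Prod>xs\<in>unit_residue_digits. u * residue_rep xs)
      - (\<Prod>xs\<in>unit_residue_digits. residue_rep (\<sigma> xs))) < 1"
    using assms \<sigma>(3) absv_residue_rep_le_1 by (intro absv_prod_diff_less_1) simp
  moreover have "(\<Prod>xs\<in>unit_residue_digits. u * residue_rep xs) = u ^ (residue_card - 1) * P"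
    unfolding P_def by (simp add: prod.distrib card_unit_residue_digits)
  moreover have "absv P = 1"
    unfolding P_def unit_residue_digits_def using absv_residue_rep_eq_1 by (simp add: absv_prod)
  ultimately have "absv ((u ^ (residue_card - 1) - 1) * P) < 1"
    by (simp add: algebra_simps)
  then show ?thesis
    using \<open>absv P = 1\<close> by simp
qed

lemma fermat:
  assumes "absv u \<le> 1"
  shows "absv (u ^ residue_card - u) < 1"
proof -
  obtain k where k: "residue_card = Suc k"
    using residue_card_ge_2 by (cases residue_card) auto
  show ?thesis
  proof (cases "absv u = 1")
    case True
    have "u ^ residue_card - u = u * (u ^ (residue_card - 1) - 1)"
      unfolding k by (simp add: algebra_simps)
    then show ?thesis
      using fermat_unit[OF True] True by simp
  next
    case False
    then have "absv u < 1"
      using assms by simp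
    moreover have "absv (u ^ k) \<le> 1"
      using assms by (simp add: absv_power power_le_one)
    ultimately have "absv (u ^ residue_card) < 1"
      unfolding k using absv_mult_less_1 by simp
    moreover have "absv (- u) < 1"
      using \<open>absv u < 1\<close> by simp
    ultimately have "absv (u ^ residue_card + - u) < 1"
      by (rule absv_add_less)
    then show ?thesis
      by simp
  qed
qed

lemma absv_power_residue_card_diff_le:
  assumes "absv x \<le> 1" "absv y \<le> 1"
  shows "absv (x ^ residue_card - y ^ residue_card) \<le> max (1 / real p) (absv (x - y)) * absv (x - y)"
proof -
  define \<rho> where "\<rho> = max (1 / real p) (absv (x - y))"
  have "absv (x - y) \<le> 1"
    using absv_diff_le_max[of x y] assms by simp
  then have "0 \<le> \<rho>" "\<rho> \<le> 1"
    unfolding \<rho>_def using p_gt_1 by (auto simp: le_max_iff_disj)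
  have "absv (x ^ residue_card - y ^ residue_card) \<le> \<rho> ^ residue_degree * absv (x - y)"
    unfolding \<rho>_def by (rule absv_power_p_power_diff_le[OF assms])
  also have "\<dots> \<le> \<rho> ^ 1 * absv (x - y)"
    using \<open>0 \<le> \<rho>\<close> \<open>\<rho> \<le> 1\<close> residue_degree_pos by (intro mult_right_mono power_decreasing) auto
  finally show ?thesis
    unfolding \<rho>_def by simp
qed

text \<open>By Fermat r = |\<beta>^q - \<beta>| < 1, and raising to the q-th power shrinks differences of
  size at most r by the factor max (1/p) r.\<close>
lemma teichmueller_step:
  assumes "absv \<beta> = 1"
  shows "absv (\<beta> ^ residue_card ^ Suc n - \<beta> ^ residue_card ^ n)
    \<le> absv (\<beta> ^ residue_card - \<beta>) * max (1 / real p) (absv (\<beta> ^ residue_card - \<beta>)) ^ n"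
proof (induction n)
  case (Suc n)
  define x where "x n = \<beta> ^ residue_card ^ n" for n
  define r where "r = absv (\<beta> ^ residue_card - \<beta>)"
  define \<rho> where "\<rho> = max (1 / real p) r"
  have "r < 1"
    unfolding r_def using fermat assms by simp
  then have "0 \<le> \<rho>" "\<rho> < 1"
    unfolding \<rho>_def using p_gt_1 by (auto simp: le_max_iff_disj)
  have x_Suc: "x (Suc n) = x n ^ residue_card" for n
    unfolding x_def by (simp add: power_mult[symmetric] mult.commute)
  have IH: "absv (x (Suc n) - x n) \<le> r * \<rho> ^ n"
    using Suc.IH unfolding x_def r_def \<rho>_def .
  have "r * \<rho> ^ n \<le> r"
    unfolding r_def using \<open>0 \<le> \<rho>\<close> \<open>\<rho> < 1\<close> by (simp add: mult_left_le power_le_one)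
  then have "max (1 / real p) (absv (x (Suc n) - x n)) \<le> \<rho>"
    using IH unfolding \<rho>_def by auto
  then have "max (1 / real p) (absv (x (Suc n) - x n)) * absv (x (Suc n) - x n) \<le> \<rho> * (r * \<rho> ^ n)"
    using IH \<open>0 \<le> \<rho>\<close> by (intro mult_mono) (auto simp: le_max_iff_disj)
  moreover have "absv (x (Suc n) ^ residue_card - x n ^ residue_card)
      \<le> max (1 / real p) (absv (x (Suc n) - x n)) * absv (x (Suc n) - x n)"
    using assms by (intro absv_power_residue_card_diff_le) (simp_all add: x_def absv_power)
  ultimately have "absv (x (Suc (Suc n)) - x (Suc n)) \<le> \<rho> * (r * \<rho> ^ n)"
    unfolding x_Suc[of "Suc n"] x_Suc[of n] by linarith
  then show ?case
    unfolding x_def r_def \<rho>_def by (simp add: ac_simps)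
qed simp

lemma teichmueller_limit:
  assumes "absv \<beta> = 1"
  obtains \<zeta> where "converges (\<lambda>n. \<beta> ^ residue_card ^ n) \<zeta>" "\<zeta> ^ (residue_card - 1) = 1"
    "absv (\<beta> - \<zeta>) < 1"
proof -
  define x where "x n = \<beta> ^ residue_card ^ n" for n
  define r where "r = absv (\<beta> ^ residue_card - \<beta>)"
  have "r < 1"
    unfolding r_def using fermat assms by simp
  then have \<rho>: "0 \<le> max (1 / real p) r" "max (1 / real p) r < 1"
    using p_gt_1 by (auto simp: le_max_iff_disj)
  note step = teichmueller_step[OF assms, folded x_def r_def]
  obtain \<zeta> where conv: "converges x \<zeta>"
    using converges_geometric[OF step \<rho>] by blast
  have "converges (\<lambda>n. x n ^ residue_card) \<zeta>"
    using converges_Suc[OF conv] unfolding x_def by (simp add: power_mult[symmetric] mult.commute)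
  then have fixed: "\<zeta> = \<zeta> ^ residue_card"
    using converges_power[OF conv] by (rule converges_unique)
  from convergesD[OF conv, of 1] obtain N where "absv (x N - \<zeta>) < 1"
    by (auto simp: eventually_sequentially)
  moreover have "absv (x N - \<beta>) < 1"
    using absv_diff_le_geometric[OF step \<rho>(1), of 0 N] \<rho>(2) \<open>r < 1\<close> unfolding x_def by simp
  ultimately have close: "absv (\<beta> - \<zeta>) < 1"
    using absv_add_less[of "x N - \<zeta>" 1 "\<beta> - x N"] absv_minus_commute[of "x N"] by simp
  have "absv (x N) = 1"
    unfolding x_def using assms by (simp add: absv_power)
  then have "absv \<zeta> = 1"
    using absv_add_eq_left[of "\<zeta> - x N" "x N"] \<open>absv (x N - \<zeta>) < 1\<close> absv_minus_commute[of "x N"]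
    by simp
  obtain k where k: "residue_card = Suc k"
    using residue_card_ge_2 by (cases residue_card) auto
  then have "\<zeta> * \<zeta> ^ (residue_card - 1) = \<zeta> * 1"
    using fixed by simp
  then have "\<zeta> ^ (residue_card - 1) = 1"
    using \<open>absv \<zeta> = 1\<close> by auto
  then show ?thesis
    using that conv close unfolding x_def by blast
qed

lemma p_not_dvd_residue_card_minus_1: "\<not> p dvd residue_card - 1"
proof
  assume "p dvd residue_card - 1"
  moreover have "p dvd residue_card"
    using residue_degree_pos by (simp add: dvd_power)
  ultimately have "p dvd residue_card - (residue_card - 1)"
    by (rule dvd_diff_nat[rotated])
  then show False
    using residue_card_ge_2 p_gt_1 by simp
qed

lemma omega_eqI:
  assumes "\<zeta> ^ (residue_card - 1) = 1" "absv (\<beta> - \<zeta>) < 1"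
  shows "omega absv residue_card \<beta> = \<zeta>"
  unfolding omega_def
proof (rule the_equality)
  fix z
  assume z: "z ^ (residue_card - 1) = 1 \<and> absv (\<beta> - z) < 1"
  then have "absv (z - \<zeta>) < 1"
    using absv_add_less[OF assms(2), of "z - \<beta>"] absv_minus_commute[of \<beta> z] by simp
  then show "z = \<zeta>"
    using root_of_unity_eq_if_close z assms(1) p_not_dvd_residue_card_minus_1 by blast
qed (use assms in simp)

theorem teichmueller:
  assumes "absv \<beta> = 1"
  shows "converges (\<lambda>n. \<beta> ^ residue_card ^ n) (omega absv residue_card \<beta>)"
proof -
  obtain \<zeta> where "converges (\<lambda>n. \<beta> ^ residue_card ^ n) \<zeta>" "\<zeta> ^ (residue_card - 1) = 1"
    "absv (\<beta> - \<zeta>) < 1"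
    using teichmueller_limit[OF assms] by blast
  then show ?thesis
    using omega_eqI by simp
qed

lemma residue_card_power_ge: "residue_card ^ n \<ge> n"
proof -
  have "n < 2 ^ n"
    by (rule less_exp)
  also have "(2::nat) ^ n \<le> residue_card ^ n"
    using residue_card_ge_2 by (rule power_mono) simp
  finally show ?thesis
    by simp
qed

lemma subseq_index:
  assumes "A \<ge> 1" "n > nat \<bar>B\<bar>"
  shows "int (nat (A * int p ^ (residue_degree * n) + B)) = A * int (residue_card ^ n) + B"
    and "nat (A * int p ^ (residue_degree * n) + B) > 0"
proof -
  have "A * int (residue_card ^ n) \<ge> int (residue_card ^ n)"
    using mult_right_mono[OF assms(1), of "int (residue_card ^ n)"] by simp
  moreover have "int (residue_card ^ n) \<ge> int n"
    by (simp only: of_nat_le_iff residue_card_power_ge)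
  ultimately have "A * int (residue_card ^ n) + B > 0"
    using assms(2) by linarith
  moreover have "int p ^ (residue_degree * n) = int (residue_card ^ n)"
    by (simp add: power_mult)
  ultimately show "int (nat (A * int p ^ (residue_degree * n) + B)) = A * int (residue_card ^ n) + B"
    and "nat (A * int p ^ (residue_degree * n) + B) > 0"
    by simp_all
qed

lemma converges_subseq_index:
  assumes "A \<ge> 1"
  shows "converges (\<lambda>n. of_nat (nat (A * int p ^ (residue_degree * n) + B))) (of_int B)"
proof -
  have "absv (of_int A * of_nat (residue_card ^ n)) \<le> 1 * (1 / real p) ^ n" for n
  proof -
    have "absv (of_nat (residue_card ^ n) :: 'k) = (1 / real p) ^ (residue_degree * n)"
      by (simp add: absv_power absv_of_nat_p power_mult)
    then have "absv (of_int A * of_nat (residue_card ^ n)) \<le> (1 / real p) ^ (residue_degree * n)"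
      using absv_of_int_le_1[of A] by (simp add: mult_left_le_one_le)
    also have "\<dots> \<le> (1 / real p) ^ n"
      using residue_degree_pos p_gt_1 by (intro power_decreasing) auto
    finally show ?thesis
      by simp
  qed
  then have "converges (\<lambda>n. of_int A * of_nat (residue_card ^ n)) 0"
    using p_gt_1 by (intro converges_zero_geometric[of "1 / real p" _ 1]) (auto intro: always_eventually)
  then have "converges (\<lambda>n. of_int B + of_int A * of_nat (residue_card ^ n)) (of_int B)"
    using converges_add[OF converges_const] by fastforce
  moreover have "of_int B + of_int A * of_nat (residue_card ^ n) = (of_nat (nat (A * int p ^ (residue_degree * n) + B)) :: 'k)"
    if "n > nat \<bar>B\<bar>" for n
  proof -
    have "(of_nat (nat (A * int p ^ (residue_degree * n) + B)) :: 'k)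
        = of_int (int (nat (A * int p ^ (residue_degree * n) + B)))"
      by (simp only: of_int_of_nat_eq)
    also have "\<dots> = of_int (A * int (residue_card ^ n) + B)"
      by (simp only: subseq_index(1)[OF assms that])
    also have "\<dots> = of_int B + of_int A * of_nat (residue_card ^ n)"
      by simp
    finally show ?thesis
      by (rule sym)
  qed
  then have "eventually (\<lambda>n. of_int B + of_int A * of_nat (residue_card ^ n)
      = (of_nat (nat (A * int p ^ (residue_degree * n) + B)) :: 'k)) sequentially"
    unfolding eventually_sequentially by (intro exI[of _ "Suc (nat \<bar>B\<bar>)"]) (auto simp: Suc_le_eq)
  ultimately show ?thesis
    by (rule converges_cong)
qed

lemma power_residue_card_power_converges:
  assumes "absv \<beta> \<le> 1"
  shows "converges (\<lambda>n. \<beta> ^ residue_card ^ n) (if absv \<beta> = 1 then omega absv residue_card \<beta> else 0)"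
proof (cases "absv \<beta> = 1")
  case False
  then have "absv \<beta> < 1"
    using assms by simp
  have "absv (\<beta> ^ residue_card ^ n) \<le> 1 * absv \<beta> ^ n" for n
    using residue_card_power_ge \<open>absv \<beta> < 1\<close> by (simp add: absv_power power_decreasing)
  then have "converges (\<lambda>n. \<beta> ^ residue_card ^ n) 0"
    using \<open>absv \<beta> < 1\<close> by (intro converges_zero_geometric[of "absv \<beta>" _ 1]) (auto intro: always_eventually)
  then show ?thesis
    using False by simp
qed (simp add: teichmueller)

lemma power_subseq_index:
  fixes \<beta> :: 'k
  assumes "\<beta> \<noteq> 0" "A \<ge> 1" "n > nat \<bar>B\<bar>"
  shows "\<beta> ^ nat (A * int p ^ (residue_degree * n) + B) = (\<beta> ^ residue_card ^ n) ^ nat A * \<beta> powi B"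
proof -
  have "\<beta> ^ nat (A * int p ^ (residue_degree * n) + B) = \<beta> powi int (nat (A * int p ^ (residue_degree * n) + B))"
    by (rule power_int_of_nat[symmetric])
  also have "\<dots> = \<beta> powi (A * int (residue_card ^ n) + B)"
    by (simp only: subseq_index(1)[OF assms(2,3)])
  also have "\<dots> = \<beta> powi (A * int (residue_card ^ n)) * \<beta> powi B"
    using assms(1) by (intro power_int_add) simp
  also have "A * int (residue_card ^ n) = int (residue_card ^ n * nat A)"
    using assms(2) by simp
  finally show ?thesis
    by (simp only: power_int_of_nat power_mult)
qed

lemma converges_power_subseq:
  assumes "absv \<beta> \<le> 1" "A \<ge> 1"
  shows "converges (\<lambda>n. poly C (of_nat (nat (A * int p ^ (residue_degree * n) + B))) *
            \<beta> ^ nat (A * int p ^ (residue_degree * n) + B))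
          (if absv \<beta> = 1 then poly C (of_int B) * omega absv residue_card \<beta> ^ nat A * \<beta> powi B else 0)"
    (is "converges (\<lambda>n. poly C (of_nat (?N n)) * \<beta> ^ ?N n) _")
proof (cases "\<beta> = 0")
  case True
  have "eventually (\<lambda>n. 0 = poly C (of_nat (?N n)) * \<beta> ^ ?N n) sequentially"
    unfolding eventually_sequentially using True subseq_index(2)[OF assms(2)]
    by (intro exI[of _ "Suc (nat \<bar>B\<bar>)"]) (auto simp: Suc_le_eq)
  then show ?thesis
    using True by (auto intro: converges_cong[OF converges_const])
next
  case False
  define \<omega> where "\<omega> = (if absv \<beta> = 1 then omega absv residue_card \<beta> else 0)"
  have conv: "converges (\<lambda>n. poly C (of_nat (?N n)) * ((\<beta> ^ residue_card ^ n) ^ nat A * \<beta> powi B))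
      (poly C (of_int B) * (\<omega> ^ nat A * \<beta> powi B))"
    unfolding \<omega>_def using power_residue_card_power_converges[OF assms(1)] converges_subseq_index[OF assms(2)]
    by (intro converges_mult converges_poly converges_power converges_const)
  have "eventually (\<lambda>n. poly C (of_nat (?N n)) * ((\<beta> ^ residue_card ^ n) ^ nat A * \<beta> powi B)
      = poly C (of_nat (?N n)) * \<beta> ^ ?N n) sequentially"
    unfolding eventually_sequentially using power_subseq_index[OF False assms(2)]
    by (intro exI[of _ "Suc (nat \<bar>B\<bar>)"]) (auto simp: Suc_le_eq)
  with conv have "converges (\<lambda>n. poly C (of_nat (?N n)) * \<beta> ^ ?N n) (poly C (of_int B) * (\<omega> ^ nat A * \<beta> powi B))"
    by (rule converges_cong)
  moreover have "poly C (of_int B) * (\<omega> ^ nat A * \<beta> powi B)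
      = (if absv \<beta> = 1 then poly C (of_int B) * omega absv residue_card \<beta> ^ nat A * \<beta> powi B else 0)"
    unfolding \<omega>_def using assms(2) by (simp add: mult.assoc)
  ultimately show ?thesis
    by simp
qed

theorem converges_power_sum_subseq:
  assumes "finite R" "\<And>\<beta>. \<beta> \<in> R \<Longrightarrow> absv \<beta> \<le> 1" "A \<ge> 1"
  shows "converges (\<lambda>n. \<Sum>\<beta>\<in>R. poly (c \<beta>) (of_nat (nat (A * int p ^ (residue_degree * n) + B))) *
            \<beta> ^ nat (A * int p ^ (residue_degree * n) + B))
          (\<Sum>\<beta>\<in>{\<beta>\<in>R. absv \<beta> = 1}. poly (c \<beta>) (of_int B) * omega absv residue_card \<beta> ^ nat A * \<beta> powi B)"
proof -
  have "converges (\<lambda>n. \<Sum>\<beta>\<in>R. poly (c \<beta>) (of_nat (nat (A * int p ^ (residue_degree * n) + B))) *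
            \<beta> ^ nat (A * int p ^ (residue_degree * n) + B))
          (\<Sum>\<beta>\<in>R. if absv \<beta> = 1 then poly (c \<beta>) (of_int B) * omega absv residue_card \<beta> ^ nat A * \<beta> powi B else 0)"
    using assms(2,3) by (intro converges_sum converges_power_subseq)
  then show ?thesis
    using assms(1) by (simp add: sum.inter_filter)
qed

end

section \<open>Ramification and the degree formula\<close>

locale padic_local_field = padic_finite_ext p absv d for p and absv :: "'k::field_char_0 \<Rightarrow> real" and d +
  fixes e :: nat
  assumes e_pos: "e > 0"
    and value_group: "{absv x | x. x \<noteq> 0} = {real p powr (real_of_int k / real e) | k. True}"
begin

lemma absv_in_value_group:
  assumes "x \<noteq> 0"
  obtains k :: int where "absv x = real p powr (real_of_int k / real e)"
  using assms value_group by blast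

definition uniformizer :: 'k where
  "uniformizer = (SOME \<pi>. \<pi> \<noteq> 0 \<and> absv \<pi> = real p powr (- 1 / real e))"

lemma uniformizer: "uniformizer \<noteq> 0" "absv uniformizer = real p powr (- 1 / real e)"
proof -
  have "real p powr (real_of_int (- 1) / real e) \<in> {absv x | x. x \<noteq> 0}"
    unfolding value_group by blast
  then have "\<exists>\<pi>. \<pi> \<noteq> 0 \<and> absv \<pi> = real p powr (- 1 / real e)"
    by auto
  then have "uniformizer \<noteq> 0 \<and> absv uniformizer = real p powr (- 1 / real e)"
    unfolding uniformizer_def by (rule someI_ex)
  then show "uniformizer \<noteq> 0" "absv uniformizer = real p powr (- 1 / real e)"
    by auto
qed

lemma absv_uniformizer_power: "absv (uniformizer ^ i) = real p powr (- real i / real e)"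
proof -
  have "absv (uniformizer ^ i) = (real p powr (- 1 / real e)) ^ i"
    by (simp add: absv_power uniformizer)
  also have "\<dots> = real p powr (real i * (- 1 / real e))"
    using p_gt_1 by (subst powr_power) auto
  finally show ?thesis
    by simp
qed

lemma absv_less_1_imp_le_uniformizer:
  assumes "x \<noteq> 0" "absv x < 1"
  shows "absv x \<le> real p powr (- 1 / real e)"
proof -
  obtain k :: int where k: "absv x = real p powr (real_of_int k / real e)"
    using absv_in_value_group[OF assms(1)] .
  moreover have "real p > 1"
    using p_gt_1 by simp
  ultimately have "real_of_int k / real e < 0"
    using assms(2) powr_less_cancel_iff[of "real p" "real_of_int k / real e" 0] by simp
  then have "real_of_int k \<le> - 1"
    using e_pos by (simp add: divide_less_0_iff)
  then have "real_of_int k / real e \<le> - 1 / real e"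
    using e_pos by (intro divide_right_mono) auto
  then show ?thesis
    unfolding k using p_gt_1 by simp
qed

lemma powr_ramified_inj:
  assumes "i < e" "i' < e"
    and "real p powr (real_of_int z - real i / real e) = real p powr (real_of_int z' - real i' / real e)"
  shows "i = i'"
proof -
  have "real_of_int z - real i / real e = real_of_int z' - real i' / real e"
    using assms(3) p_gt_1 powr_inj[of "real p"] by simp
  then have "real e * real_of_int z - real i = real e * real_of_int z' - real i'"
    using e_pos by (simp add: field_simps)
  then have "real_of_int (int e * (z - z')) = real_of_int (int i - int i')"
    by (simp add: algebra_simps)
  then have eq: "int e * (z - z') = int i - int i'"
    by (simp only: of_int_eq_iff)
  have "z = z'"
  proof (rule ccontr)
    assume "z \<noteq> z'"
    then have "1 \<le> \<bar>z - z'\<bar>"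
      by simp
    then have "int e \<le> int e * \<bar>z - z'\<bar>"
      by (simp add: mult_le_cancel_left1)
    also have "\<dots> = \<bar>int i - int i'\<bar>"
      unfolding eq[symmetric] by (simp add: abs_mult)
    finally show False
      using assms(1,2) by simp
  qed
  then show ?thesis
    using eq by simp
qed

definition integral_basis_index :: "(nat \<times> nat) set" where
  "integral_basis_index = {..<e} \<times> {..<residue_degree}"

definition integral_basis :: "nat \<times> nat \<Rightarrow> 'k" where
  "integral_basis ij = uniformizer ^ fst ij * residue_basis (snd ij)"

lemma finite_integral_basis_index: "finite integral_basis_index"
  unfolding integral_basis_index_def by simp

lemma card_integral_basis_index: "card integral_basis_index = e * residue_degree"
  unfolding integral_basis_index_def by (simp add: card_cartesian_product)

lemma sum_integral_basis:
  "(\<Sum>ij\<in>integral_basis_index. c ij * integral_basis ij)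
     = (\<Sum>i<e. uniformizer ^ i * (\<Sum>j<residue_degree. c (i, j) * residue_basis j))"
proof -
  have "(\<Sum>ij\<in>integral_basis_index. c ij * integral_basis ij)
      = (\<Sum>(i, j)\<in>{..<e} \<times> {..<residue_degree}. c (i, j) * (uniformizer ^ i * residue_basis j))"
    unfolding integral_basis_index_def integral_basis_def by (intro sum.cong) auto
  also have "\<dots> = (\<Sum>i<e. \<Sum>j<residue_degree. c (i, j) * (uniformizer ^ i * residue_basis j))"
    by (rule sum.cartesian_product[symmetric])
  finally show ?thesis
    by (simp add: sum_distrib_left ac_simps)
qed

lemma absv_uniformizer_power_residue_comb:
  assumes "\<forall>j<residue_degree. c j \<in> Qp_in absv" "\<exists>j<residue_degree. c j \<noteq> 0"
  obtains z :: int where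
    "absv (uniformizer ^ i * (\<Sum>j<residue_degree. c j * residue_basis j)) = real p powr (real_of_int z - real i / real e)"
proof -
  obtain z :: int where "absv (\<Sum>j<residue_degree. c j * residue_basis j) = real p powr z"
    using assms by (rule absv_residue_independent_combination[OF residue_independent_residue_basis])
  then have "absv (uniformizer ^ i * (\<Sum>j<residue_degree. c j * residue_basis j))
      = real p powr (- real i / real e) * real p powr z"
    by (simp add: absv_uniformizer_power)
  then show ?thesis
    using that by (simp add: powr_add[symmetric])
qed

text \<open>In a nontrivial combination the summands \<pi>^i S i with S i \<noteq> 0 have absolute values
  p^z \<cdot> p^(-i/e) which are pairwise distinct, so the largest one dominates.\<close>
lemma lin_indep_integral_basis: "lin_indep_on (Qp_in absv) integral_basis_index integral_basis"
  unfolding lin_indep_on_def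
proof (intro allI impI ballI, rule ccontr)
  fix c ij
  assume cQ: "\<forall>ij\<in>integral_basis_index. c ij \<in> Qp_in absv"
    and zero: "(\<Sum>ij\<in>integral_basis_index. c ij * integral_basis ij) = 0"
    and ij: "ij \<in> integral_basis_index" "c ij \<noteq> 0"
  define Z where "Z i = uniformizer ^ i * (\<Sum>j<residue_degree. c (i, j) * residue_basis j)" for i
  define J where "J = {i. i < e \<and> (\<exists>j<residue_degree. c (i, j) \<noteq> 0)}"
  have absv_Z: "\<exists>z::int. absv (Z i) = real p powr (real_of_int z - real i / real e)" if "i \<in> J" for i
    using that cQ absv_uniformizer_power_residue_comb[of "\<lambda>j. c (i, j)" i]
    unfolding J_def integral_basis_index_def Z_def by blast
  have Z_zero: "Z i = 0" if "i < e" "i \<notin> J" for i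
    using that unfolding J_def Z_def by auto
  have "fst ij \<in> J"
    using ij unfolding J_def integral_basis_index_def by (cases ij) auto
  moreover have "J \<subseteq> {..<e}"
    unfolding J_def by auto
  then have "finite J"
    by (rule finite_subset) simp
  ultimately obtain i1 where i1: "i1 \<in> J" "Max ((\<lambda>i. absv (Z i)) ` J) = absv (Z i1)"
    using obtains_MAX by blast
  have "i1 < e"
    using i1(1) unfolding J_def by simp
  obtain z1 :: int where z1: "absv (Z i1) = real p powr (real_of_int z1 - real i1 / real e)"
    using absv_Z[OF i1(1)] by blast
  then have "absv (Z i1) > 0"
    using p_gt_1 by simp
  have "absv (Z i) < absv (Z i1)" if "i \<in> {..<e} - {i1}" for i
  proof (cases "i \<in> J")
    case True
    obtain z :: int where z: "absv (Z i) = real p powr (real_of_int z - real i / real e)"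
      using absv_Z[OF True] by blast
    have "absv (Z i) \<le> absv (Z i1)"
      using True \<open>finite J\<close> i1(2)[symmetric] by (simp add: Max_ge)
    moreover have "absv (Z i) \<noteq> absv (Z i1)"
      using powr_ramified_inj[of i i1 z z1] that \<open>i1 < e\<close> z z1 by auto
    ultimately show ?thesis
      by simp
  next
    case False
    then show ?thesis
      using Z_zero that \<open>absv (Z i1) > 0\<close> by simp
  qed
  then have "absv (\<Sum>i<e. Z i) = absv (Z i1)"
    using \<open>i1 < e\<close> by (intro absv_sum_eq_dominant) auto
  moreover have "(\<Sum>i<e. Z i) = 0"
    using zero unfolding sum_integral_basis Z_def .
  ultimately show False
    using \<open>absv (Z i1) > 0\<close> by simp
qed

abbreviation basis_comb :: "(nat \<times> nat \<Rightarrow> 'k) \<Rightarrow> 'k" where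
  "basis_comb c \<equiv> \<Sum>ij\<in>integral_basis_index. c ij * integral_basis ij"

text \<open>Digit by digit in the uniformizer: dividing the error by \<pi>^k leaves an integral element,
  whose residue is an integral combination of the residue basis.\<close>
lemma integral_basis_approx_partial:
  assumes "absv x \<le> 1" "k \<le> e"
  shows "\<exists>a. absv (x - (\<Sum>i<k. uniformizer ^ i * (\<Sum>j<residue_degree. of_int (a (i, j)) * residue_basis j)))
           \<le> real p powr (- real k / real e)"
  using assms(2)
proof (induction k)
  case 0
  show ?case
    using assms(1) p_gt_1 by simp
next
  case (Suc k)
  then obtain a where a: "absv (x - (\<Sum>i<k. uniformizer ^ i * (\<Sum>j<residue_degree. of_int (a (i, j)) * residue_basis j)))
      \<le> real p powr (- real k / real e)"
    by auto
  define P where "P = (\<Sum>i<k. uniformizer ^ i * (\<Sum>j<residue_degree. of_int (a (i, j)) * residue_basis j))"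
  define y where "y = (x - P) / uniformizer ^ k"
  have "real p powr (- real k / real e) > 0"
    using p_gt_1 by simp
  then have "absv y \<le> 1"
    using a unfolding y_def P_def by (simp add: absv_divide absv_uniformizer_power divide_le_eq_1)
  then obtain n where n: "absv (y - (\<Sum>j<residue_degree. of_int (n j) * residue_basis j)) < 1"
    using residue_basis_spans by blast
  define R where "R = (\<Sum>j<residue_degree. of_int (n j) * residue_basis j)"
  have "absv (y - R) < 1"
    using n unfolding R_def .
  then have small: "absv (y - R) \<le> real p powr (- 1 / real e)"
    using absv_less_1_imp_le_uniformizer[of "y - R"] by (cases "y = R") auto
  define a' where "a' ij = (if fst ij = k then n (snd ij) else a ij)" for ij
  have "(\<Sum>i<Suc k. uniformizer ^ i * (\<Sum>j<residue_degree. of_int (a' (i, j)) * residue_basis j))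
      = P + uniformizer ^ k * R"
    unfolding a'_def P_def R_def by simp
  moreover have "uniformizer ^ k * y = x - P"
    unfolding y_def using uniformizer(1) by simp
  ultimately have "x - (\<Sum>i<Suc k. uniformizer ^ i * (\<Sum>j<residue_degree. of_int (a' (i, j)) * residue_basis j))
      = uniformizer ^ k * (y - R)"
    by (simp add: algebra_simps)
  then have "absv (x - (\<Sum>i<Suc k. uniformizer ^ i * (\<Sum>j<residue_degree. of_int (a' (i, j)) * residue_basis j)))
      \<le> real p powr (- real k / real e) * real p powr (- 1 / real e)"
    using small by (simp add: absv_uniformizer_power mult_left_mono)
  also have "\<dots> = real p powr (- real (Suc k) / real e)"
  proof -
    have "- real k / real e + - 1 / real e = - real (Suc k) / real e"
      using e_pos by (simp add: field_simps)
    then show ?thesis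
      by (simp only: powr_add[symmetric])
  qed
  finally show ?case
    by blast
qed

lemma integral_basis_approx:
  assumes "absv x \<le> 1"
  shows "\<exists>a. absv (x - basis_comb (\<lambda>ij. of_int (a ij))) \<le> 1 / real p"
proof -
  obtain a where "absv (x - (\<Sum>i<e. uniformizer ^ i * (\<Sum>j<residue_degree. of_int (a (i, j)) * residue_basis j)))
      \<le> real p powr (- real e / real e)"
    using integral_basis_approx_partial[OF assms order_refl] by blast
  moreover have "real p powr (- real e / real e) = 1 / real p"
    using e_pos p_gt_1 by (simp add: powr_minus_divide)
  ultimately show ?thesis
    unfolding sum_integral_basis by auto
qed

definition approx_digits :: "'k \<Rightarrow> nat \<times> nat \<Rightarrow> int" where
  "approx_digits x = (SOME a. absv (x - basis_comb (\<lambda>ij. of_int (a ij))) \<le> 1 / real p)"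

lemma approx_digits:
  assumes "absv x \<le> 1"
  shows "absv (x - basis_comb (\<lambda>ij. of_int (approx_digits x ij))) \<le> 1 / real p"
  unfolding approx_digits_def using integral_basis_approx[OF assms] by (rule someI_ex)

primrec expansion_rest :: "'k \<Rightarrow> nat \<Rightarrow> 'k" where
  "expansion_rest x 0 = x"
| "expansion_rest x (Suc N) =
    (expansion_rest x N - basis_comb (\<lambda>ij. of_int (approx_digits (expansion_rest x N) ij))) / of_nat p"

definition expansion_coeff :: "'k \<Rightarrow> nat \<Rightarrow> nat \<times> nat \<Rightarrow> 'k" where
  "expansion_coeff x N ij = (\<Sum>n<N. of_nat p ^ n * of_int (approx_digits (expansion_rest x n) ij))"

lemma absv_expansion_rest_le_1:
  assumes "absv x \<le> 1"
  shows "absv (expansion_rest x N) \<le> 1"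
proof (induction N)
  case (Suc N)
  then have "absv (expansion_rest x N - basis_comb (\<lambda>ij. of_int (approx_digits (expansion_rest x N) ij)))
      \<le> 1 / real p"
    by (rule approx_digits)
  then have "absv (expansion_rest x N - basis_comb (\<lambda>ij. of_int (approx_digits (expansion_rest x N) ij)))
      * real p \<le> 1"
    using p_gt_1 by (simp add: pos_le_divide_eq mult.commute)
  then show ?case
    using p_gt_1 by (simp add: absv_divide absv_of_nat_p)
qed (use assms in simp)

lemma expansion_identity: "x = basis_comb (expansion_coeff x N) + of_nat p ^ N * expansion_rest x N"
proof (induction N)
  case (Suc N)
  let ?D = "basis_comb (\<lambda>ij. of_int (approx_digits (expansion_rest x N) ij))"
  have "basis_comb (expansion_coeff x (Suc N)) = basis_comb (expansion_coeff x N) + of_nat p ^ N * ?D"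
    unfolding expansion_coeff_def by (simp add: algebra_simps sum.distrib sum_distrib_left)
  moreover have "of_nat p ^ Suc N * expansion_rest x (Suc N) = of_nat p ^ N * (expansion_rest x N - ?D)"
    using p_gt_1 by simp
  ultimately show ?case
    using Suc.IH by (simp add: algebra_simps)
qed (simp add: expansion_coeff_def)

lemma expansion_coeff_converges: "\<exists>L. converges (\<lambda>N. expansion_coeff x N ij) L"
proof -
  have step: "absv (expansion_coeff x (Suc N) ij - expansion_coeff x N ij) \<le> 1 * (1 / real p) ^ N" for N
    unfolding expansion_coeff_def using absv_of_int_le_1[of "approx_digits (expansion_rest x N) ij"]
    by (simp add: absv_of_nat_p_power mult_left_le)
  obtain L where "converges (\<lambda>N. expansion_coeff x N ij) L"
    by (rule converges_geometric[OF step]) (use p_gt_1 in auto)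
  then show ?thesis
    by blast
qed

lemma in_span_integral_basis_of_le_1:
  assumes "absv x \<le> 1"
  shows "in_span_on (Qp_in absv) integral_basis_index integral_basis x"
proof -
  obtain L where L: "\<And>ij. converges (\<lambda>N. expansion_coeff x N ij) (L ij)"
    using expansion_coeff_converges by metis
  have "expansion_coeff x N ij \<in> Qp_in absv" for N ij
    unfolding expansion_coeff_def using subfield_Qp_in
    by (intro subfield_sum) (simp_all add: subfield_closed flip: of_nat_power)
  then have LQ: "L ij \<in> Qp_in absv" for ij
    by (rule Qp_in_closed[OF _ L])
  have conv_L: "converges (\<lambda>N. basis_comb (expansion_coeff x N)) (basis_comb L)"
    using L by (intro converges_sum converges_mult converges_const)
  have "converges (\<lambda>N. of_nat p ^ N * expansion_rest x N) 0"
    using absv_expansion_rest_le_1[OF assms] p_gt_1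
    by (intro converges_zero_geometric[of "1 / real p" _ 1])
      (auto simp: absv_of_nat_p_power mult_left_le eventually_sequentially)
  then have "converges (\<lambda>N. x - of_nat p ^ N * expansion_rest x N) (x - 0)"
    by (rule converges_diff[OF converges_const])
  moreover have "x - of_nat p ^ N * expansion_rest x N = basis_comb (expansion_coeff x N)" for N
    using eq_diff_eq[THEN iffD2, OF expansion_identity[of x N, symmetric]] by simp
  ultimately have "converges (\<lambda>N. basis_comb (expansion_coeff x N)) x"
    by simp
  then have "x = basis_comb L"
    using conv_L by (rule converges_unique)
  then show ?thesis
    unfolding in_span_on_def using LQ by (intro exI[of _ L]) auto
qed

lemma in_span_integral_basis: "in_span_on (Qp_in absv) integral_basis_index integral_basis x"
proof -
  obtain M where "absv x < real p ^ M"
    using real_arch_pow p_gt_1 by (metis of_nat_1 of_nat_less_iff)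
  then have "absv (x * of_nat p ^ M) \<le> 1"
    using p_gt_1 by (simp add: absv_of_nat_p_power power_one_over)
  then obtain c where c: "\<forall>ij\<in>integral_basis_index. c ij \<in> Qp_in absv"
    "x * of_nat p ^ M = basis_comb c"
    using in_span_integral_basis_of_le_1 unfolding in_span_on_def by blast
  define c' where "c' ij = c ij / of_nat p ^ M" for ij
  have "x = basis_comb c'"
    using c(2) p_gt_1 unfolding c'_def by (simp add: sum_divide_distrib[symmetric] eq_divide_eq)
  moreover have "\<forall>ij\<in>integral_basis_index. c' ij \<in> Qp_in absv"
    using c(1) subfield_Qp_in unfolding c'_def by (simp add: subfield_closed flip: of_nat_power)
  ultimately show ?thesis
    unfolding in_span_on_def by (intro exI[of _ c']) auto
qed

theorem degree_eq_ramification_times_residue_degree: "d = e * residue_degree"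
proof -
  obtain b where b: "lin_indep_on (Qp_in absv) {..<d} b" "\<And>x. in_span_on (Qp_in absv) {..<d} b x"
    using ext_degree_basis by blast
  have "card {..<d} \<le> card integral_basis_index"
    using b(1) in_span_integral_basis subfield_Qp_in finite_integral_basis_index
    by (intro card_le_if_lin_indep_in_span) auto
  moreover have "card integral_basis_index \<le> card {..<d}"
    using lin_indep_integral_basis b(2) subfield_Qp_in finite_integral_basis_index
    by (intro card_le_if_lin_indep_in_span) auto
  ultimately show ?thesis
    using card_integral_basis_index by simp
qed

end

theorem corollary4p1:
  fixes p :: nat and absv :: "'k::field_char_0 \<Rightarrow> real"
    and s :: "nat \<Rightarrow> 'k" and l :: nat and a :: "nat \<Rightarrow> 'k" and g :: "'k poly"
    and c :: "'k \<Rightarrow> 'k poly" and d e :: nat and A B :: int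
  assumes "prime p"
    and "padic_absv p absv"
    and "\<forall>n. s n \<in> Zp_in absv"
    and "\<forall>i<l. a i \<in> Zp_in absv"
    and "\<forall>n. s (n + l) + (\<Sum>i<l. a i * s (n + i)) = 0"
    and "g = monom 1 l + (\<Sum>i<l. monom (a i) i)"
    and "\<exists>rs. g = (\<Prod>r\<leftarrow>rs. [:- r, 1:])"
    and "field_generated_by (Qp_in absv) {\<beta>. poly g \<beta> = 0}"
    and "ext_degree (Qp_in absv) d"
    and "e > 0"
    and "{absv x | x. x \<noteq> 0} = {real p powr (real_of_int k / real e) | k. True}"
    and "\<forall>n. s n = (\<Sum>\<beta>\<in>{\<beta>. poly g \<beta> = 0}. poly (c \<beta>) (of_nat n) * \<beta> ^ n)"
    and "A \<ge> 1"
  shows "let L = (\<Sum>\<beta>\<in>{\<beta>. poly g \<beta> = 0 \<and> absv \<beta> = 1}.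
                   poly (c \<beta>) (of_int B) * omega absv (p ^ (d div e)) \<beta> ^ nat A * \<beta> powi B)
         in L \<in> Zp_in absv
            \<and> abs_converges absv (\<lambda>n. s (nat (A * int p ^ ((d div e) * n) + B))) L
            \<and> (\<exists>q::'k poly. q \<noteq> 0 \<and> (\<forall>i. coeff q i \<in> Qp_in absv) \<and> poly q L = 0)"
proof -
  interpret padic_local_field p absv d e
    using assms(1,2,9,10,11) by unfold_locales auto
  define R where "R = {\<beta>. poly g \<beta> = 0}"
  define L where "L = (\<Sum>\<beta>\<in>{\<beta>\<in>R. absv \<beta> = 1}.
    poly (c \<beta>) (of_int B) * omega absv residue_card \<beta> ^ nat A * \<beta> powi B)"
  have "coeff g l = 1"
    unfolding assms(6) by (simp add: coeff_sum coeff_monom)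
  then have "finite R"
    unfolding R_def by (intro poly_roots_finite) auto
  moreover have "absv \<beta> \<le> 1" if "\<beta> \<in> R" for \<beta>
    using assms(4,6) that unfolding R_def Zp_in_def by (intro absv_root_le_1[of l a]) auto
  ultimately have conv: "converges (\<lambda>n. s (nat (A * int p ^ (residue_degree * n) + B))) L"
    using converges_power_sum_subseq[of R A c B] assms(12,13) unfolding L_def R_def by simp
  then have "L \<in> Zp_in absv"
    using assms(3) Zp_in_closed[OF _ conv] by blast
  have "residue_degree = d div e"
    using degree_eq_ramification_times_residue_degree e_pos by simp
  then show ?thesis
    using conv \<open>L \<in> Zp_in absv\<close> Qp_in_algebraic[of L] unfolding Let_def L_def R_def Zp_in_def by simp
qed

end
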